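(* Let $D\subseteq\mathbb R^d$ ($d\in\{1,2,3\}$) be open, bounded and of class $S$, $f_0,\phi_1,\dots,\phi_m\in L^2(D)$, $f(x,z):=f_0(x)+\sum_iz_i\phi_i(x)$, $\Xi\subset\mathbb R^m$ compact, $\alpha\in\mathbb R$, $F\colon L^2(D)\to\mathbb R$ Fréchet differentiable, $u^*\in L^2(D)$, and $y^*:=\hat{\mathcal S}(u^* )\in\mathcal C(\bar D\times\Xi)$. Then the following are equivalent: (a) there exists a nonnegative regular Borel measure $\mu^*\in\mathcal M(\bar D\times\Xi)$ with \[ \langle DF(u^* ),h\rangle+\int_{\bar D\times\Xi}[A^{-1}h](x)\,d\mu^*(x,z)=0\ \ \forall h\in L^2(D),\quad y^*(x,z)\le\alpha\ \ \forall(x,z)\in\bar D\times\Xi,\quad\int_{\bar D\times\Xi}(y^*(x,z)-\alpha)\,d\mu^*(x,z)=0; \] (b) there exist $\lambda^*\ge0$ and a Radon probability measure $\tilde\mu$ supported on $M(u^* )$ with \[ \langle DF(u^* ),h\rangle+\lambda^*\int_{\bar D\times\Xi}[A^{-1}h](x)\,d\tilde\mu(x,z)=0\ \ \forall h\in L^2(D),\quad \max_{(x,z)\in\bar D\times\Xi}y^*(x,z)\le\alpha,\quad\lambda^*\Big(\max_{(x,z)\in\bar D\times\Xi}y^*(x,z)-\alpha\Big)=0. \]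
   Context: $D$ is of class $S$ if there exist $\gamma\in(0,1)$, $r_0>0$ with $\mathrm{meas}(B_r(x)\setminus D)\ge\gamma\,\mathrm{meas}(B_r(x))$ for all $x\in\partial D$, $r<r_0$. $A^{-1}\colon L^2(D)\to\mathcal C(\bar D)$ maps $h$ to the unique weak solution $y\in H_0^1(D)\cap\mathcal C(\bar D)$ of $-\Delta y=h$, $y|_{\partial D}=0$. $\hat{\mathcal S}(u)\in\mathcal C(\bar D\times\Xi)$ is given by $[\hat{\mathcal S}(u)](\cdot,z)=A^{-1}(u+f(\cdot,z))$ for $z\in\Xi$. $M(u):=\{(x,z)\in\bar D\times\Xi\mid[\hat{\mathcal S}(u)](x,z)=\max_{(x',z')\in\bar D\times\Xi}[\hat{\mathcal S}(u)](x',z')\}$. *)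

theory Defs
  imports "HOL-Probability.Probability"
begin

definition class_S :: "(real^'n) set \<Rightarrow> bool" where
  "class_S D \<longleftrightarrow> (\<exists>\<gamma> r0. 0 < \<gamma> \<and> \<gamma> < 1 \<and> 0 < r0 \<and>
     (\<forall>x\<in>frontier D. \<forall>r. 0 < r \<and> r < r0 \<longrightarrow>
        measure lebesgue (ball x r - D) \<ge> \<gamma> * measure lebesgue (ball x r)))"

(* L^2(D): measurable functions square integrable over D (values outside D irrelevant) *)
definition L2 :: "(real^'n) set \<Rightarrow> (real^'n \<Rightarrow> real) set" where
  "L2 D = {f. f \<in> borel_measurable lebesgue \<and> set_integrable lebesgue D (\<lambda>x. (f x)\<^sup>2)}"

definition L2_norm :: "(real^'n) set \<Rightarrow> (real^'n \<Rightarrow> real) \<Rightarrow> real" where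
  "L2_norm D f = sqrt (LINT x:D|lebesgue. (f x)\<^sup>2)"

(* F is a well-defined functional on L^2(D) (respects a.e. equality on D),
   Frechet differentiable at u with derivative DF (a bounded linear functional on L^2(D)) *)
definition L2_frechet_deriv ::
  "(real^'n) set \<Rightarrow> ((real^'n \<Rightarrow> real) \<Rightarrow> real) \<Rightarrow> (real^'n \<Rightarrow> real)
     \<Rightarrow> ((real^'n \<Rightarrow> real) \<Rightarrow> real) \<Rightarrow> bool" where
  "L2_frechet_deriv D F u DF \<longleftrightarrow>
     (\<forall>f\<in>L2 D. \<forall>g\<in>L2 D. (AE x in lebesgue. x \<in> D \<longrightarrow> f x = g x) \<longrightarrow> F f = F g) \<and>
     (\<forall>f\<in>L2 D. \<forall>g\<in>L2 D. DF (\<lambda>x. f x + g x) = DF f + DF g) \<and>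
     (\<forall>f\<in>L2 D. \<forall>c. DF (\<lambda>x. c * f x) = c * DF f) \<and>
     (\<exists>C. \<forall>h\<in>L2 D. \<bar>DF h\<bar> \<le> C * L2_norm D h) \<and>
     (\<forall>e>0. \<exists>\<delta>>0. \<forall>h\<in>L2 D. L2_norm D h < \<delta> \<longrightarrow>
        \<bar>F (\<lambda>x. u x + h x) - F u - DF h\<bar> \<le> e * L2_norm D h)"

(* C^infinity functions: every iterated partial derivative exists *)
definition smooth_fun :: "(real^'n \<Rightarrow> real) \<Rightarrow> bool" where
  "smooth_fun f \<longleftrightarrow> (\<exists>S. f \<in> S \<and> (\<forall>g\<in>S. (\<forall>x. g differentiable (at x)) \<and>
       (\<forall>i. (\<lambda>x. frechet_derivative g (at x) (axis i 1)) \<in> S)))"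

definition pd :: "(real^'n \<Rightarrow> real) \<Rightarrow> 'n \<Rightarrow> real^'n \<Rightarrow> real" where
  "pd g i x = frechet_derivative g (at x) (axis i 1)"

definition test_fn :: "(real^'n) set \<Rightarrow> (real^'n \<Rightarrow> real) \<Rightarrow> bool" where
  "test_fn D \<phi> \<longleftrightarrow> smooth_fun \<phi> \<and> compact (closure {x. \<phi> x \<noteq> 0})
      \<and> closure {x. \<phi> x \<noteq> 0} \<subseteq> D"

definition weak_grad :: "(real^'n) set \<Rightarrow> (real^'n \<Rightarrow> real) \<Rightarrow> (real^'n \<Rightarrow> real^'n) \<Rightarrow> bool" where
  "weak_grad D y G \<longleftrightarrow> (\<forall>i. (\<lambda>x. G x $ i) \<in> borel_measurable lebesgue) \<and>
     (\<forall>\<phi> i. test_fn D \<phi> \<longrightarrow>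
        set_integrable lebesgue D (\<lambda>x. y x * pd \<phi> i x) \<and>
        set_integrable lebesgue D (\<lambda>x. G x $ i * \<phi> x) \<and>
        (LINT x:D|lebesgue. y x * pd \<phi> i x) = - (LINT x:D|lebesgue. G x $ i * \<phi> x))"

definition H01 :: "(real^'n) set \<Rightarrow> (real^'n \<Rightarrow> real) set" where
  "H01 D = {y. y \<in> L2 D \<and> (\<exists>G. weak_grad D y G \<and> (\<forall>i. (\<lambda>x. G x $ i) \<in> L2 D) \<and>
      (\<exists>\<psi>. (\<forall>k. test_fn D (\<psi> k)) \<and>
         (\<lambda>k. LINT x:D|lebesgue. (y x - \<psi> k x)\<^sup>2 + (\<Sum>i\<in>UNIV. (G x $ i - pd (\<psi> k) i x)\<^sup>2))
           \<longlonglongrightarrow> 0))}"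

definition poisson_sol :: "(real^'n) set \<Rightarrow> (real^'n \<Rightarrow> real) \<Rightarrow> (real^'n \<Rightarrow> real) \<Rightarrow> bool" where
  "poisson_sol D h y \<longleftrightarrow> y \<in> H01 D \<and> continuous_on (closure D) y \<and>
     (\<forall>x\<in>frontier D. y x = 0) \<and>
     (\<exists>G. weak_grad D y G \<and> (\<forall>\<phi>. test_fn D \<phi> \<longrightarrow>
        (LINT x:D|lebesgue. (\<Sum>i\<in>UNIV. G x $ i * pd \<phi> i x)) = (LINT x:D|lebesgue. h x * \<phi> x)))"

definition regular_measure :: "'a::topological_space measure \<Rightarrow> bool" where
  "regular_measure \<mu> \<longleftrightarrow> (\<forall>A\<in>sets \<mu>.
     emeasure \<mu> A = (INF U\<in>{U. open U \<and> A \<subseteq> U}. emeasure \<mu> U) \<and>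
     emeasure \<mu> A = (SUP K\<in>{K. compact K \<and> K \<subseteq> A}. emeasure \<mu> K))"

definition measure_support :: "'a::metric_space measure \<Rightarrow> 'a set" where
  "measure_support \<mu> = {p. \<forall>e>0. emeasure \<mu> (ball p e) > 0}"

definition rhs_f :: "(real^'n \<Rightarrow> real) \<Rightarrow> ('m::finite \<Rightarrow> real^'n \<Rightarrow> real) \<Rightarrow> real^'n \<Rightarrow> real^'m \<Rightarrow> real" where
  "rhs_f f0 \<phi> x z = f0 x + (\<Sum>i\<in>UNIV. z $ i * \<phi> i x)"

definition Shat :: "((real^'n \<Rightarrow> real) \<Rightarrow> (real^'n \<Rightarrow> real)) \<Rightarrow> (real^'n \<Rightarrow> real)
    \<Rightarrow> ('m::finite \<Rightarrow> real^'n \<Rightarrow> real) \<Rightarrow> (real^'n \<Rightarrow> real) \<Rightarrow> (real^'n) \<times> (real^'m) \<Rightarrow> real" where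
  "Shat Ainv f0 \<phi> u p = Ainv (\<lambda>x'. u x' + rhs_f f0 \<phi> x' (snd p)) (fst p)"

definition Mset :: "(real^'n) set \<Rightarrow> (real^'m::finite) set \<Rightarrow> ((real^'n \<Rightarrow> real) \<Rightarrow> (real^'n \<Rightarrow> real))
    \<Rightarrow> (real^'n \<Rightarrow> real) \<Rightarrow> ('m \<Rightarrow> real^'n \<Rightarrow> real) \<Rightarrow> (real^'n \<Rightarrow> real) \<Rightarrow> ((real^'n) \<times> (real^'m)) set" where
  "Mset D \<Xi> Ainv f0 \<phi> u = {p \<in> closure D \<times> \<Xi>.
      Shat Ainv f0 \<phi> u p = (SUP q\<in>closure D \<times> \<Xi>. Shat Ainv f0 \<phi> u q)}"

end

(*
  A^{-1} is linear: weak solutions of the Dirichlet problem form a linear space, and a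
  solution y with zero data vanishes.  For the latter, the weak equation makes the weak
  gradient of y orthogonal to the gradients of the test functions approximating y in H^1,
  so the gradient is zero, and the Poincare inequality for these test functions then forces
  y = 0.  Hence y* = Shat u* is affine in z and continuous on the compact set closure D x Xi,
  and the equivalence becomes a statement about measures on a compact metric space K
  carrying a continuous S <= alpha: the complementarity condition integral (S - alpha) d mu = 0
  says that mu lives on the level set {S = alpha}, which is the set of maximisers of S as
  soon as mu is nonzero.  Normalising mu by lambda* = mu(K) gives (b), and scaling the
  probability measure by lambda* gives back (a).
*)
theory Submission
  imports Defs
begin

section \<open>Square-integrable functions\<close>

definition L2_inner :: "(real^'n) set \<Rightarrow> (real^'n \<Rightarrow> real) \<Rightarrow> (real^'n \<Rightarrow> real) \<Rightarrow> real" where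
  "L2_inner D f g = (LINT x:D|lebesgue. f x * g x)"

lemma set_integrable_L2_mult:
  assumes D: "D \<in> sets lebesgue" and f: "f \<in> L2 D" and g: "g \<in> L2 D"
  shows "set_integrable lebesgue D (\<lambda>x. f x * g x)"
proof (rule set_integrable_bound)
  have [measurable]: "f \<in> borel_measurable lebesgue" "g \<in> borel_measurable lebesgue"
    using f g by (auto simp: L2_def)
  show "set_integrable lebesgue D (\<lambda>x. (f x)\<^sup>2 + (g x)\<^sup>2)"
    using f g by (auto simp: L2_def intro: set_integral_add)
  show "set_borel_measurable lebesgue D (\<lambda>x. f x * g x)"
    using D by (simp add: set_borel_measurable_def)
  have "\<bar>f x * g x\<bar> \<le> (f x)\<^sup>2 + (g x)\<^sup>2" for x
  proof -
    have "2 * (\<bar>f x\<bar> * \<bar>g x\<bar>) \<le> (f x)\<^sup>2 + (g x)\<^sup>2"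
      using sum_squares_bound[of "\<bar>f x\<bar>" "\<bar>g x\<bar>"] by (simp add: mult.assoc)
    moreover have "0 \<le> \<bar>f x\<bar> * \<bar>g x\<bar>" by simp
    ultimately show ?thesis unfolding abs_mult by linarith
  qed
  then show "AE x in lebesgue. x \<in> D \<longrightarrow> norm (f x * g x) \<le> norm ((f x)\<^sup>2 + (g x)\<^sup>2)"
    by simp
qed

lemma set_integrable_lin:
  fixes f g :: "'a \<Rightarrow> real"
  assumes "set_integrable M A f" and "set_integrable M A g"
  shows "set_integrable M A (\<lambda>x. a * f x + b * g x)"
  using assms by (intro set_integral_add set_integrable_mult_right)

lemma set_integral_lin:
  fixes f g :: "'a \<Rightarrow> real"
  assumes "set_integrable M A f" and "set_integrable M A g"
  shows "(LINT x:A|M. a * f x + b * g x) = a * (LINT x:A|M. f x) + b * (LINT x:A|M. g x)"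
  using assms by (simp add: set_integrable_mult_right set_integral_add set_integral_mult_right)

lemma set_integrable_sum:
  fixes f :: "'i \<Rightarrow> 'a \<Rightarrow> real"
  assumes "\<And>i. i \<in> I \<Longrightarrow> set_integrable M A (f i)"
  shows "set_integrable M A (\<lambda>x. \<Sum>i\<in>I. f i x)"
  using assms unfolding set_integrable_def scaleR_sum_right by (rule Bochner_Integration.integrable_sum)

lemma set_integral_sum:
  fixes f :: "'i \<Rightarrow> 'a \<Rightarrow> real"
  assumes "\<And>i. i \<in> I \<Longrightarrow> set_integrable M A (f i)"
  shows "(LINT x:A|M. (\<Sum>i\<in>I. f i x)) = (\<Sum>i\<in>I. (LINT x:A|M. f i x))"
  using assms unfolding set_lebesgue_integral_def set_integrable_def scaleR_sum_right
  by (rule Bochner_Integration.integral_sum)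

lemma L2_lin:
  assumes D: "D \<in> sets lebesgue" and f: "f \<in> L2 D" and g: "g \<in> L2 D"
  shows "(\<lambda>x. a * f x + b * g x) \<in> L2 D"
proof -
  have [measurable]: "f \<in> borel_measurable lebesgue" "g \<in> borel_measurable lebesgue"
    using f g by (auto simp: L2_def)
  have "set_integrable lebesgue D
      (\<lambda>x. a\<^sup>2 * (f x * f x) + (2 * a * b * (f x * g x) + b\<^sup>2 * (g x * g x)))"
    using set_integrable_L2_mult[OF D f f] set_integrable_L2_mult[OF D f g]
      set_integrable_L2_mult[OF D g g]
    by (intro set_integral_add set_integrable_mult_right)
  then show ?thesis
    unfolding L2_def by (simp add: power2_eq_square algebra_simps)
qed

lemma L2_diff:
  assumes "D \<in> sets lebesgue" and "f \<in> L2 D" and "g \<in> L2 D"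
  shows "(\<lambda>x. f x - g x) \<in> L2 D"
  using L2_lin[OF assms, of 1 "-1"] by simp

lemma L2_sum:
  assumes D: "D \<in> sets lebesgue" and "finite I" and "\<And>i. i \<in> I \<Longrightarrow> h i \<in> L2 D"
  shows "(\<lambda>x. \<Sum>i\<in>I. c i * h i x) \<in> L2 D"
  using assms(2,3)
proof (induction I rule: finite_induct)
  case empty
  then show ?case by (simp add: L2_def)
next
  case (insert j I)
  then show ?case using L2_lin[OF D, of "h j" "\<lambda>x. \<Sum>i\<in>I. c i * h i x" "c j" 1] by simp
qed

lemma L2_inner_lin_left:
  assumes D: "D \<in> sets lebesgue" and f: "f \<in> L2 D" and g: "g \<in> L2 D" and k: "k \<in> L2 D"
  shows "L2_inner D (\<lambda>x. a * f x + b * g x) k = a * L2_inner D f k + b * L2_inner D g k"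
  using set_integral_lin[OF set_integrable_L2_mult[OF D f k] set_integrable_L2_mult[OF D g k], of a b]
  unfolding L2_inner_def by (simp add: distrib_right mult.assoc)

lemma L2_inner_commute: "L2_inner D f g = L2_inner D g f"
  unfolding L2_inner_def by (simp add: mult.commute)

lemma L2_inner_self_nonneg: "0 \<le> L2_inner D f f"
  unfolding L2_inner_def set_lebesgue_integral_def
  by (rule integral_nonneg_AE) (simp add: indicator_def)

lemma L2_inner_eq_0: "(\<And>x. x \<in> D \<Longrightarrow> f x = 0) \<Longrightarrow> L2_inner D f g = 0"
  unfolding L2_inner_def set_lebesgue_integral_def
  by (rule integral_eq_zero_AE) (auto simp: indicator_def)

lemma L2_inner_self_eq_0_AE:
  assumes D: "D \<in> sets lebesgue" and f: "f \<in> L2 D" and z: "L2_inner D f f = 0"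
  shows "AE x in lebesgue. x \<in> D \<longrightarrow> f x = 0"
proof -
  have "integrable lebesgue (\<lambda>x. indicator D x * (f x * f x))"
    using set_integrable_L2_mult[OF D f f] by (simp add: set_integrable_def)
  then have "AE x in lebesgue. indicator D x * (f x * f x) = 0"
    using z unfolding L2_inner_def set_lebesgue_integral_def
    by (subst integral_nonneg_eq_0_iff_AE[symmetric]) (auto simp: indicator_def)
  then show ?thesis by eventually_elim (auto simp: indicator_def)
qed

lemma L2_inner_self_lin:
  assumes D: "D \<in> sets lebesgue" and f: "f \<in> L2 D" and g: "g \<in> L2 D"
  shows "L2_inner D (\<lambda>x. a * f x + b * g x) (\<lambda>x. a * f x + b * g x)
    = a\<^sup>2 * L2_inner D f f + 2 * a * b * L2_inner D f g + b\<^sup>2 * L2_inner D g g"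
proof -
  have fg: "(\<lambda>x. a * f x + b * g x) \<in> L2 D" by (rule L2_lin[OF D f g])
  have "L2_inner D k (\<lambda>x. a * f x + b * g x) = a * L2_inner D f k + b * L2_inner D g k"
    if "k \<in> L2 D" for k
    by (metis L2_inner_commute L2_inner_lin_left[OF D f g that])
  then show ?thesis
    using L2_inner_commute[of D g f]
    by (simp add: L2_inner_lin_left[OF D f g fg] f g power2_eq_square algebra_simps)
qed

lemma L2_inner_le:
  assumes D: "D \<in> sets lebesgue" and f: "f \<in> L2 D" and g: "g \<in> L2 D"
  shows "L2_inner D f g \<le> (L2_inner D f f + L2_inner D g g) / 2"
  using L2_inner_self_nonneg[of D "\<lambda>x. 1 * f x + (-1) * g x"] L2_inner_self_lin[OF D f g, of 1 "-1"]
  by simp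

lemma L2_inner_self_lin_le:
  assumes D: "D \<in> sets lebesgue" and f: "f \<in> L2 D" and g: "g \<in> L2 D"
  shows "L2_inner D (\<lambda>x. a * f x + b * g x) (\<lambda>x. a * f x + b * g x)
    \<le> 2 * a\<^sup>2 * L2_inner D f f + 2 * b\<^sup>2 * L2_inner D g g"
  using L2_inner_self_nonneg[of D "\<lambda>x. a * f x + (- b) * g x"] L2_inner_self_lin[OF D f g, of a "- b"]
    L2_inner_self_lin[OF D f g, of a b]
  by (simp add: algebra_simps)

lemma open_imp_sets_lebesgue: "open (D :: (real^'n) set) \<Longrightarrow> D \<in> sets lebesgue"
  using borel_open[of D] by (intro sets_completionI_sets) simp

section \<open>Test functions\<close>

lemma frechet_derivative_lin:
  fixes f g :: "'a::real_normed_vector \<Rightarrow> real"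
  assumes "f differentiable (at x)" and "g differentiable (at x)"
  shows "frechet_derivative (\<lambda>x. a * f x + b * g x) (at x)
    = (\<lambda>v. a * frechet_derivative f (at x) v + b * frechet_derivative g (at x) v)"
  using assms unfolding frechet_derivative_works
  by (intro frechet_derivative_at[symmetric] has_derivative_add has_derivative_mult_right)

lemma smooth_fun_differentiable: "smooth_fun f \<Longrightarrow> f differentiable (at x)"
  unfolding smooth_fun_def by blast

lemma smooth_fun_lin:
  assumes "smooth_fun f" and "smooth_fun g"
  shows "smooth_fun (\<lambda>x. a * f x + b * g x)"
proof -
  obtain S where "f \<in> S" and S: "\<And>h. h \<in> S \<Longrightarrow> (\<forall>x. h differentiable (at x)) \<and>
      (\<forall>i. (\<lambda>x. frechet_derivative h (at x) (axis i 1)) \<in> S)"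
    using assms(1) unfolding smooth_fun_def by blast
  obtain T where "g \<in> T" and T: "\<And>h. h \<in> T \<Longrightarrow> (\<forall>x. h differentiable (at x)) \<and>
      (\<forall>i. (\<lambda>x. frechet_derivative h (at x) (axis i 1)) \<in> T)"
    using assms(2) unfolding smooth_fun_def by blast
  define U where "U = (\<lambda>(c, d, h, k) x. c * h x + d * k x) ` (UNIV \<times> UNIV \<times> S \<times> T)"
  have "(\<forall>x. u differentiable (at x)) \<and> (\<forall>i. (\<lambda>x. frechet_derivative u (at x) (axis i 1)) \<in> U)"
    if "u \<in> U" for u
  proof -
    obtain c d h k where u: "u = (\<lambda>x. c * h x + d * k x)" and "h \<in> S" "k \<in> T"
      using \<open>u \<in> U\<close> unfolding U_def by auto
    then have dh: "\<And>x. h differentiable (at x)" and dk: "\<And>x. k differentiable (at x)"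
      and hS: "\<And>i. (\<lambda>x. frechet_derivative h (at x) (axis i 1)) \<in> S"
      and kT: "\<And>i. (\<lambda>x. frechet_derivative k (at x) (axis i 1)) \<in> T"
      using S T by blast+
    have "(\<lambda>x. frechet_derivative u (at x) (axis i 1))
        = (\<lambda>x. c * frechet_derivative h (at x) (axis i 1) + d * frechet_derivative k (at x) (axis i 1))"
      for i
      unfolding u by (simp add: frechet_derivative_lin dh dk)
    moreover have "(\<lambda>x. c * frechet_derivative h (at x) (axis i 1)
        + d * frechet_derivative k (at x) (axis i 1)) \<in> U" for i
      unfolding U_def
      by (rule image_eqI[where x = "(c, d, \<lambda>x. frechet_derivative h (at x) (axis i 1),
            \<lambda>x. frechet_derivative k (at x) (axis i 1))"])
        (simp_all add: hS kT)
    moreover have "u differentiable (at x)" for x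
      unfolding u using dh dk by (intro derivative_intros)
    ultimately show ?thesis by metis
  qed
  moreover have "(\<lambda>x. a * f x + b * g x) \<in> U"
    using \<open>f \<in> S\<close> \<open>g \<in> T\<close> unfolding U_def
    by (intro image_eqI[where x = "(a, b, f, g)"]) simp_all
  ultimately show ?thesis unfolding smooth_fun_def by blast
qed

lemma smooth_fun_pd: "smooth_fun f \<Longrightarrow> smooth_fun (pd f i)"
  unfolding smooth_fun_def pd_def by blast

lemma pd_lin:
  assumes "smooth_fun f" and "smooth_fun g"
  shows "pd (\<lambda>x. a * f x + b * g x) i x = a * pd f i x + b * pd g i x"
  unfolding pd_def using assms by (simp add: frechet_derivative_lin smooth_fun_differentiable)

lemma test_fn_iff_bounded:
  "test_fn D \<phi> \<longleftrightarrow> smooth_fun \<phi> \<and> bounded {x. \<phi> x \<noteq> 0} \<and> closure {x. \<phi> x \<noteq> 0} \<subseteq> D"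
  unfolding test_fn_def compact_closure ..

lemma test_fn_lin:
  assumes "test_fn D \<phi>" and "test_fn D \<psi>"
  shows "test_fn D (\<lambda>x. a * \<phi> x + b * \<psi> x)"
proof -
  have sub: "{x. a * \<phi> x + b * \<psi> x \<noteq> 0} \<subseteq> {x. \<phi> x \<noteq> 0} \<union> {x. \<psi> x \<noteq> 0}"
    by auto
  have "closure {x. a * \<phi> x + b * \<psi> x \<noteq> 0} \<subseteq> D"
    using closure_mono[OF sub] assms unfolding test_fn_def by auto
  moreover have "bounded {x. a * \<phi> x + b * \<psi> x \<noteq> 0}"
    using bounded_subset[OF _ sub] assms unfolding test_fn_iff_bounded by auto
  ultimately show ?thesis
    using smooth_fun_lin assms unfolding test_fn_iff_bounded by blast
qed

lemma test_fn_pd: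
  assumes "test_fn D \<phi>"
  shows "test_fn D (pd \<phi> i)"
proof -
  let ?C = "closure {x. \<phi> x \<noteq> 0}"
  have sm: "smooth_fun \<phi>" and bd: "bounded ?C" and CD: "?C \<subseteq> D"
    using assms unfolding test_fn_iff_bounded by auto
  have "pd \<phi> i x = 0" if "x \<notin> ?C" for x
  proof -
    have "frechet_derivative \<phi> (at x) = frechet_derivative (\<lambda>_. 0) (at x)"
      by (rule frechet_derivative_transform_within_open[of _ _ "- ?C"])
        (use that smooth_fun_differentiable[OF sm] in \<open>auto intro: closure_subset[THEN subsetD]\<close>)
    then show ?thesis by (simp add: pd_def)
  qed
  then have sub: "{x. pd \<phi> i x \<noteq> 0} \<subseteq> ?C" by blast
  then have "closure {x. pd \<phi> i x \<noteq> 0} \<subseteq> ?C" by (simp add: closure_minimal)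
  then show ?thesis
    using sub bounded_subset[OF bd sub] CD smooth_fun_pd[OF sm] unfolding test_fn_iff_bounded by blast
qed

lemma test_fn_continuous_on: "test_fn D \<phi> \<Longrightarrow> continuous_on S \<phi>"
  unfolding test_fn_def
  by (meson continuous_at_imp_continuous_on differentiable_imp_continuous_within smooth_fun_differentiable)

lemma test_fn_eq_0: "test_fn D \<phi> \<Longrightarrow> x \<notin> D \<Longrightarrow> \<phi> x = 0"
  unfolding test_fn_def using closure_subset[of "{x. \<phi> x \<noteq> 0}"] by auto

lemma test_fn_L2:
  assumes D: "D \<in> sets lebesgue" and t: "test_fn D \<phi>"
  shows "\<phi> \<in> L2 D"
proof -
  let ?C = "closure {x. \<phi> x \<noteq> 0}"
  have C: "compact ?C" "?C \<subseteq> D" using t unfolding test_fn_def by auto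
  have \<phi>: "continuous_on UNIV \<phi>" by (rule test_fn_continuous_on[OF t])
  then have [measurable]: "\<phi> \<in> borel_measurable borel" by (rule borel_measurable_continuous_onI)
  have "integrable lborel (\<lambda>x. indicator ?C x *\<^sub>R (\<phi> x)\<^sup>2)"
    by (rule borel_integrable_compact[OF C(1)]) (intro continuous_intros continuous_on_subset[OF \<phi>], auto)
  then have "integrable lebesgue (\<lambda>x. indicator ?C x *\<^sub>R (\<phi> x)\<^sup>2)"
    by (simp add: integrable_completion)
  moreover have "(\<lambda>x. indicator ?C x *\<^sub>R (\<phi> x)\<^sup>2) = (\<lambda>x. indicator D x *\<^sub>R (\<phi> x)\<^sup>2)"
  proof
    show "indicator ?C x *\<^sub>R (\<phi> x)\<^sup>2 = indicator D x *\<^sub>R (\<phi> x)\<^sup>2" for x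
      using C(2) test_fn_eq_0[OF t, of x] closure_subset[of "{x. \<phi> x \<noteq> 0}"]
      by (cases "x \<in> ?C"; cases "x \<in> D") auto
  qed
  ultimately have "integrable lebesgue (\<lambda>x. indicator D x *\<^sub>R (\<phi> x)\<^sup>2)" by simp
  moreover have "\<phi> \<in> borel_measurable lebesgue" by (rule measurable_completion) simp
  ultimately show ?thesis unfolding L2_def set_integrable_def by auto
qed

lemma test_fn_has_real_derivative_line:
  assumes t: "test_fn D \<phi>"
  shows "((\<lambda>s. \<phi> (x + s *\<^sub>R axis i 1)) has_real_derivative pd \<phi> i (x + t *\<^sub>R axis i 1)) (at t)"
proof -
  let ?e = "axis i (1::real)" and ?y = "x + t *\<^sub>R axis i 1"
  have d\<phi>: "(\<phi> has_derivative frechet_derivative \<phi> (at ?y)) (at ?y)"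
    using t smooth_fun_differentiable frechet_derivative_works unfolding test_fn_def by blast
  have line: "((\<lambda>s. x + s *\<^sub>R ?e) has_derivative (\<lambda>s. s *\<^sub>R ?e)) (at t)"
    by (auto intro!: derivative_eq_intros)
  have "(\<lambda>s. frechet_derivative \<phi> (at ?y) (s *\<^sub>R ?e)) = (*) (pd \<phi> i ?y)"
    unfolding pd_def linear_scale[OF has_derivative_linear[OF d\<phi>]] by auto
  then show ?thesis
    using has_derivative_compose[OF line d\<phi>] by (simp add: has_field_derivative_def o_def)
qed

section \<open>A Poincare inequality\<close>

lemma Cauchy_Schwarz_integral_interval:
  fixes f :: "real \<Rightarrow> real"
  assumes ab: "a < b" and f: "continuous_on {a..b} f"
  shows "(integral {a..b} f)\<^sup>2 \<le> (b - a) * integral {a..b} (\<lambda>t. (f t)\<^sup>2)"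
proof -
  define I J where "I = integral {a..b} f" and "J = integral {a..b} (\<lambda>t. (f t)\<^sup>2)"
  define s where "s = I / (b - a)"
  have "(f has_integral I) {a..b}" and "((\<lambda>t. (f t)\<^sup>2) has_integral J) {a..b}"
    unfolding I_def J_def using f
    by (auto intro!: integrable_integral integrable_continuous_interval continuous_intros)
  then have "((\<lambda>t. (f t)\<^sup>2 - 2 * s * f t + s\<^sup>2) has_integral (J - 2 * s * I + s\<^sup>2 * (b - a))) {a..b}"
    using ab has_integral_const_real[of "s\<^sup>2" a b]
    by (intro has_integral_add has_integral_diff has_integral_mult_right) (auto simp: mult.commute)
  then have "0 \<le> J - 2 * s * I + s\<^sup>2 * (b - a)"
  proof (rule has_integral_nonneg)
    show "0 \<le> (f t)\<^sup>2 - 2 * s * f t + s\<^sup>2" for t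
      using zero_le_power2[of "f t - s"] unfolding power2_diff by (simp add: algebra_simps)
  qed
  moreover have "s\<^sup>2 * (b - a) = s * I" and "s * I = I\<^sup>2 / (b - a)"
    using ab unfolding s_def by (simp_all add: power2_eq_square)
  ultimately have "I\<^sup>2 / (b - a) \<le> J" by simp
  then show ?thesis
    using ab unfolding I_def J_def by (simp add: pos_divide_le_eq mult.commute)
qed

lemma poincare_line:
  fixes g dg :: "real^'n \<Rightarrow> real" and e :: "real^'n"
  assumes R: "R > 0" and e: "norm e = 1"
    and deriv: "\<And>x t. ((\<lambda>s. g (x + s *\<^sub>R e)) has_real_derivative dg (x + t *\<^sub>R e)) (at t)"
    and cdg: "continuous_on UNIV dg"
    and out: "\<And>x. norm x \<ge> R \<Longrightarrow> g x = 0"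
  shows "(g x)\<^sup>2 \<le> (2*R) * integral {-2*R..0} (\<lambda>t. (dg (x + t *\<^sub>R e))\<^sup>2)"
proof (cases "norm x \<ge> R")
  case True
  have "0 \<le> integral {-2*R..0} (\<lambda>t. (dg (x + t *\<^sub>R e))\<^sup>2)"
    by (rule integral_nonneg)
       (auto intro!: integrable_continuous_interval continuous_intros continuous_on_compose2[OF cdg])
  then show ?thesis using True out R by simp
next
  case False
  let ?f = "\<lambda>t. dg (x + t *\<^sub>R e)"
  have cf: "continuous_on {-2*R..0} ?f"
    by (auto intro!: continuous_intros continuous_on_compose2[OF cdg])
  have "(?f has_integral (g (x + 0 *\<^sub>R e) - g (x + (-2*R) *\<^sub>R e))) {-2*R..0}"
  proof (rule fundamental_theorem_of_calculus)
    show "-2*R \<le> 0" using R by simp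
    fix t assume "t \<in> {-2*R..0}"
    show "((\<lambda>s. g (x + s *\<^sub>R e)) has_vector_derivative ?f t) (at t within {-2*R..0})"
      using deriv[of x t] by (simp add: has_real_derivative_iff_has_vector_derivative has_vector_derivative_at_within)
  qed
  moreover have "g (x + (-2*R) *\<^sub>R e) = 0"
  proof (rule out)
    have "norm ((-2*R) *\<^sub>R e) \<le> norm (x + (-2*R) *\<^sub>R e) + norm x"
      by (metis add_diff_cancel_left' norm_triangle_ineq4 add.commute)
    then show "R \<le> norm (x + (-2*R) *\<^sub>R e)" using e R False by simp
  qed
  ultimately have "integral {-2*R..0} ?f = g x" by (simp add: integral_unique)
  then show ?thesis using Cauchy_Schwarz_integral_interval[of "-2*R" 0 ?f] cf R by simp
qed

lemma poincare_line_nn_integral: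
  fixes g dg :: "real^'n \<Rightarrow> real" and e :: "real^'n"
  assumes R: "R > 0" and e: "norm e = 1"
    and deriv: "\<And>x t. ((\<lambda>s. g (x + s *\<^sub>R e)) has_real_derivative dg (x + t *\<^sub>R e)) (at t)"
    and cdg: "continuous_on UNIV dg"
    and out: "\<And>x. norm x \<ge> R \<Longrightarrow> g x = 0"
  shows "ennreal ((g x)\<^sup>2)
    \<le> ennreal (2*R) * (\<integral>\<^sup>+t. ennreal ((dg (x + t *\<^sub>R e))\<^sup>2) * indicator {-2*R..0} t \<partial>lborel)"
proof -
  let ?I = "integral {-2*R..0} (\<lambda>t. (dg (x + t *\<^sub>R e))\<^sup>2)"
  have "continuous_on {-2*R..0} (\<lambda>t. (dg (x + t *\<^sub>R e))\<^sup>2)"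
    by (auto intro!: continuous_intros continuous_on_compose2[OF cdg])
  then have int: "(\<lambda>t. (dg (x + t *\<^sub>R e))\<^sup>2) integrable_on {-2*R..0}"
    by (rule integrable_continuous_interval)
  have "ennreal ((g x)\<^sup>2) \<le> ennreal (2*R * ?I)"
    by (rule ennreal_leI[OF poincare_line[OF R e deriv cdg out]])
  also have "\<dots> = ennreal (2*R) * ennreal ?I"
    using R integral_nonneg[OF int] by (simp add: ennreal_mult)
  also have "ennreal ?I = (\<integral>\<^sup>+t. ennreal ((dg (x + t *\<^sub>R e))\<^sup>2) * indicator {-2*R..0} t \<partial>lborel)"
    by (rule nn_integral_has_integral_lebesgue'[symmetric, OF _ integrable_integral[OF int]]) simp
  finally show ?thesis .
qed

lemma nn_integral_lborel_shift:
  fixes f :: "'a::euclidean_space \<Rightarrow> ennreal"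
  assumes [measurable]: "f \<in> borel_measurable borel"
  shows "(\<integral>\<^sup>+x. f (x + c) \<partial>lborel) = (\<integral>\<^sup>+x. f x \<partial>lborel)"
proof -
  have "(\<integral>\<^sup>+x. f x \<partial>lborel) = (\<integral>\<^sup>+x. f x \<partial>distr lborel borel ((+) c))"
    by (simp add: lborel_distr_plus)
  also have "\<dots> = (\<integral>\<^sup>+x. f (c + x) \<partial>lborel)"
    by (subst nn_integral_distr) auto
  finally show ?thesis by (simp add: add.commute)
qed

text \<open>Integrate the one-dimensional bound over all lines parallel to \<open>e\<close> (Tonelli); each
  segment \<open>{-2*R..0}\<close> contributes a translate of \<open>\<integral>(dg)\<^sup>2\<close>.\<close>

lemma poincare_nn_integral:
  fixes g dg :: "real^'n \<Rightarrow> real" and e :: "real^'n"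
  assumes R: "R > 0" and e: "norm e = 1"
    and deriv: "\<And>x t. ((\<lambda>s. g (x + s *\<^sub>R e)) has_real_derivative dg (x + t *\<^sub>R e)) (at t)"
    and cdg: "continuous_on UNIV dg"
    and out: "\<And>x. norm x \<ge> R \<Longrightarrow> g x = 0"
  shows "(\<integral>\<^sup>+x. ennreal ((g x)\<^sup>2) \<partial>lborel) \<le> ennreal (4*R\<^sup>2) * (\<integral>\<^sup>+x. ennreal ((dg x)\<^sup>2) \<partial>lborel)"
proof -
  have [measurable]: "dg \<in> borel_measurable borel" using cdg by (rule borel_measurable_continuous_onI)
  let ?A = "{-2*R..0::real}"
  let ?H = "\<lambda>x t. ennreal ((dg (x + t *\<^sub>R e))\<^sup>2) * indicator ?A t"
  let ?Q = "\<integral>\<^sup>+x. ennreal ((dg x)\<^sup>2) \<partial>lborel"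
  have shift: "(\<integral>\<^sup>+x. ennreal ((dg (x + t *\<^sub>R e))\<^sup>2) \<partial>lborel) = ?Q" for t
    by (rule nn_integral_lborel_shift[where f = "\<lambda>x. ennreal ((dg x)\<^sup>2)"]) measurable
  have "(\<integral>\<^sup>+x. ennreal ((g x)\<^sup>2) \<partial>lborel) \<le> (\<integral>\<^sup>+x. ennreal (2*R) * (\<integral>\<^sup>+t. ?H x t \<partial>lborel) \<partial>lborel)"
    by (rule nn_integral_mono) (rule poincare_line_nn_integral[OF R e deriv cdg out])
  also have "\<dots> = ennreal (2*R) * (\<integral>\<^sup>+x. (\<integral>\<^sup>+t. ?H x t \<partial>lborel) \<partial>lborel)"
    by (rule nn_integral_cmult) measurable
  also have "(\<integral>\<^sup>+x. (\<integral>\<^sup>+t. ?H x t \<partial>lborel) \<partial>lborel) = (\<integral>\<^sup>+t. (\<integral>\<^sup>+x. ?H x t \<partial>lborel) \<partial>lborel)"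
    by (rule lborel_pair.Fubini'[symmetric]) measurable
  also have "(\<integral>\<^sup>+t. (\<integral>\<^sup>+x. ?H x t \<partial>lborel) \<partial>lborel) = (\<integral>\<^sup>+t. ?Q * indicator ?A t \<partial>lborel)"
    by (intro nn_integral_cong) (simp add: nn_integral_multc shift)
  also have "\<dots> = ?Q * ennreal (2*R)"
    using R by (simp add: nn_integral_cmult_indicator)
  also have "ennreal (2*R) * (?Q * ennreal (2*R)) = ennreal (4*R\<^sup>2) * ?Q"
  proof -
    have "ennreal (4*R\<^sup>2) = ennreal (2*R) * ennreal (2*R)"
      using R by (simp add: ennreal_mult[symmetric] power2_eq_square)
    then show ?thesis by (simp add: mult_ac)
  qed
  finally show ?thesis .
qed

lemma L2_inner_self_eq_nn_integral:
  fixes f :: "real^'n \<Rightarrow> real"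
  assumes cf: "continuous_on UNIV f" and zero: "\<And>x. x \<notin> D \<Longrightarrow> f x = 0"
    and bd: "D \<subseteq> cball 0 R"
  shows "ennreal (L2_inner D f f) = (\<integral>\<^sup>+x. ennreal ((f x)\<^sup>2) \<partial>lborel)"
proof -
  have fm[measurable]: "f \<in> borel_measurable borel" using cf by (rule borel_measurable_continuous_onI)
  have "integrable lborel (\<lambda>x. indicator (cball 0 R) x *\<^sub>R (f x)\<^sup>2)"
    by (rule borel_integrable_compact) (auto intro!: continuous_intros continuous_on_subset[OF cf])
  moreover have e1: "(\<lambda>x. indicator (cball 0 R) x *\<^sub>R (f x)\<^sup>2) = (\<lambda>x. (f x)\<^sup>2)"
  proof
    fix x show "indicator (cball 0 R) x *\<^sub>R (f x)\<^sup>2 = (f x)\<^sup>2"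
    proof (cases "x \<in> cball 0 R")
      case False
      then have "x \<notin> D" using bd by blast
      then show ?thesis using zero[of x] by simp
    qed simp
  qed
  ultimately have int: "integrable lborel (\<lambda>x. (f x)\<^sup>2)" by simp
  have e2: "(\<lambda>x. indicator D x *\<^sub>R (f x * f x)) = (\<lambda>x. (f x)\<^sup>2)"
  proof
    fix x show "indicator D x *\<^sub>R (f x * f x) = (f x)\<^sup>2"
      using zero[of x] by (cases "x \<in> D") (auto simp: power2_eq_square)
  qed
  have "L2_inner D f f = integral\<^sup>L lebesgue (\<lambda>x. (f x)\<^sup>2)"
    unfolding L2_inner_def set_lebesgue_integral_def e2 ..
  also have "\<dots> = integral\<^sup>L lborel (\<lambda>x. (f x)\<^sup>2)"
    by (rule integral_completion) simp
  finally have "ennreal (L2_inner D f f) = ennreal (integral\<^sup>L lborel (\<lambda>x. (f x)\<^sup>2))" by simp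
  also have "\<dots> = (\<integral>\<^sup>+x. ennreal ((f x)\<^sup>2) \<partial>lborel)"
    by (rule nn_integral_eq_integral[OF int, symmetric]) simp
  finally show ?thesis .
qed

lemma test_fn_poincare:
  assumes t: "test_fn D \<psi>" and R: "0 < R" and D: "D \<subseteq> ball 0 R"
  shows "L2_inner D \<psi> \<psi> \<le> 4*R\<^sup>2 * L2_inner D (pd \<psi> i) (pd \<psi> i)"
proof -
  have DR: "D \<subseteq> cball 0 R" using D by auto
  have "ennreal (L2_inner D \<psi> \<psi>) = (\<integral>\<^sup>+x. ennreal ((\<psi> x)\<^sup>2) \<partial>lborel)"
    by (rule L2_inner_self_eq_nn_integral[OF test_fn_continuous_on[OF t] test_fn_eq_0[OF t] DR])
  also have "\<dots> \<le> ennreal (4*R\<^sup>2) * (\<integral>\<^sup>+x. ennreal ((pd \<psi> i x)\<^sup>2) \<partial>lborel)"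
  proof (rule poincare_nn_integral[OF R norm_axis_1])
    show "((\<lambda>s. \<psi> (x + s *\<^sub>R axis i 1)) has_real_derivative pd \<psi> i (x + t *\<^sub>R axis i 1)) (at t)"
      for x t by (rule test_fn_has_real_derivative_line[OF t])
    show "continuous_on UNIV (pd \<psi> i)" by (rule test_fn_continuous_on[OF test_fn_pd[OF t]])
    show "\<psi> x = 0" if "R \<le> norm x" for x
      using that D by (intro test_fn_eq_0[OF t]) auto
  qed
  also have "(\<integral>\<^sup>+x. ennreal ((pd \<psi> i x)\<^sup>2) \<partial>lborel) = ennreal (L2_inner D (pd \<psi> i) (pd \<psi> i))"
    using test_fn_pd[OF t] DR
    by (intro L2_inner_self_eq_nn_integral[symmetric] test_fn_continuous_on test_fn_eq_0)
  finally show ?thesis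
    by (simp add: ennreal_mult[symmetric] L2_inner_self_nonneg)
qed

section \<open>Weak solutions of the Dirichlet problem\<close>

definition H1_sqdist ::
  "(real^'n) set \<Rightarrow> (real^'n \<Rightarrow> real) \<Rightarrow> (real^'n \<Rightarrow> real^'n) \<Rightarrow> (real^'n \<Rightarrow> real) \<Rightarrow> real" where
  "H1_sqdist D y G \<psi> = L2_inner D (\<lambda>x. y x - \<psi> x) (\<lambda>x. y x - \<psi> x)
     + (\<Sum>i\<in>UNIV. L2_inner D (\<lambda>x. G x $ i - pd \<psi> i x) (\<lambda>x. G x $ i - pd \<psi> i x))"

lemma H1_sqdist_nonneg: "0 \<le> H1_sqdist D y G \<psi>"
  unfolding H1_sqdist_def by (intro add_nonneg_nonneg sum_nonneg L2_inner_self_nonneg)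

lemma H1_sqdist_eq_integral:
  assumes D: "D \<in> sets lebesgue" and y: "y \<in> L2 D" and G: "\<And>i. (\<lambda>x. G x $ i) \<in> L2 D"
    and t: "test_fn D \<psi>"
  shows "(LINT x:D|lebesgue. (y x - \<psi> x)\<^sup>2 + (\<Sum>i\<in>UNIV. (G x $ i - pd \<psi> i x)\<^sup>2))
    = H1_sqdist D y G \<psi>"
proof -
  have y\<psi>: "(\<lambda>x. y x - \<psi> x) \<in> L2 D"
    using L2_diff[OF D y test_fn_L2[OF D t]] .
  have G\<psi>: "(\<lambda>x. G x $ i - pd \<psi> i x) \<in> L2 D" for i
    using L2_diff[OF D G test_fn_L2[OF D test_fn_pd[OF t]]] .
  show ?thesis
    using set_integrable_L2_mult[OF D y\<psi> y\<psi>] set_integrable_L2_mult[OF D G\<psi> G\<psi>]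
    unfolding H1_sqdist_def L2_inner_def power2_eq_square
    by (simp add: set_integral_add set_integrable_sum set_integral_sum)
qed

lemma mem_H01_iff:
  assumes D: "D \<in> sets lebesgue"
  shows "y \<in> H01 D \<longleftrightarrow> y \<in> L2 D \<and> (\<exists>G. weak_grad D y G \<and> (\<forall>i. (\<lambda>x. G x $ i) \<in> L2 D) \<and>
    (\<exists>\<psi>. (\<forall>k. test_fn D (\<psi> k)) \<and> (\<lambda>k. H1_sqdist D y G (\<psi> k)) \<longlonglongrightarrow> 0))"
    (is "_ \<longleftrightarrow> ?rhs")
proof -
  have eq: "(\<lambda>k. LINT x:D|lebesgue. (y x - \<psi> k x)\<^sup>2 + (\<Sum>i\<in>UNIV. (G x $ i - pd (\<psi> k) i x)\<^sup>2))
      = (\<lambda>k. H1_sqdist D y G (\<psi> k))"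
    if "y \<in> L2 D" "\<And>i. (\<lambda>x. G x $ i) \<in> L2 D" "\<And>k. test_fn D (\<psi> k)" for G \<psi>
    using H1_sqdist_eq_integral[OF D that(1,2) that(3)] by simp
  show ?thesis
  proof
    assume "y \<in> H01 D"
    then obtain G \<psi> where "y \<in> L2 D" "weak_grad D y G" "\<And>i. (\<lambda>x. G x $ i) \<in> L2 D"
      "\<And>k. test_fn D (\<psi> k)"
      and "(\<lambda>k. LINT x:D|lebesgue. (y x - \<psi> k x)\<^sup>2 + (\<Sum>i\<in>UNIV. (G x $ i - pd (\<psi> k) i x)\<^sup>2))
        \<longlonglongrightarrow> 0"
      unfolding H01_def by blast
    then show ?rhs by (simp only: eq) blast
  next
    assume ?rhs
    then obtain G \<psi> where "y \<in> L2 D" "weak_grad D y G" "\<And>i. (\<lambda>x. G x $ i) \<in> L2 D"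
      "\<And>k. test_fn D (\<psi> k)" and "(\<lambda>k. H1_sqdist D y G (\<psi> k)) \<longlonglongrightarrow> 0"
      by blast
    then show "y \<in> H01 D"
      unfolding H01_def by (simp only: eq[symmetric]) blast
  qed
qed

lemma weak_grad_lin:
  assumes "weak_grad D y1 G1" and "weak_grad D y2 G2"
  shows "weak_grad D (\<lambda>x. a * y1 x + b * y2 x) (\<lambda>x. a *\<^sub>R G1 x + b *\<^sub>R G2 x)"
  unfolding weak_grad_def
proof (intro conjI allI impI)
  fix i
  have [measurable]: "(\<lambda>x. G1 x $ i) \<in> borel_measurable lebesgue" "(\<lambda>x. G2 x $ i) \<in> borel_measurable lebesgue"
    using assms unfolding weak_grad_def by blast+
  show "(\<lambda>x. (a *\<^sub>R G1 x + b *\<^sub>R G2 x) $ i) \<in> borel_measurable lebesgue"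
    by simp
  fix \<phi> assume "test_fn D \<phi>"
  then have y: "set_integrable lebesgue D (\<lambda>x. y1 x * pd \<phi> i x)"
      "set_integrable lebesgue D (\<lambda>x. y2 x * pd \<phi> i x)"
    and G: "set_integrable lebesgue D (\<lambda>x. G1 x $ i * \<phi> x)"
      "set_integrable lebesgue D (\<lambda>x. G2 x $ i * \<phi> x)"
    and eq: "(LINT x:D|lebesgue. y1 x * pd \<phi> i x) = - (LINT x:D|lebesgue. G1 x $ i * \<phi> x)"
      "(LINT x:D|lebesgue. y2 x * pd \<phi> i x) = - (LINT x:D|lebesgue. G2 x $ i * \<phi> x)"
    using assms unfolding weak_grad_def by blast+
  have y_eq: "(\<lambda>x. (a * y1 x + b * y2 x) * pd \<phi> i x) = (\<lambda>x. a * (y1 x * pd \<phi> i x) + b * (y2 x * pd \<phi> i x))"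
    and G_eq: "(\<lambda>x. (a *\<^sub>R G1 x + b *\<^sub>R G2 x) $ i * \<phi> x) = (\<lambda>x. a * (G1 x $ i * \<phi> x) + b * (G2 x $ i * \<phi> x))"
    by (auto simp: algebra_simps)
  show "set_integrable lebesgue D (\<lambda>x. (a * y1 x + b * y2 x) * pd \<phi> i x)"
    unfolding y_eq using y by (rule set_integrable_lin)
  show "set_integrable lebesgue D (\<lambda>x. (a *\<^sub>R G1 x + b *\<^sub>R G2 x) $ i * \<phi> x)"
    unfolding G_eq using G by (rule set_integrable_lin)
  show "(LINT x:D|lebesgue. (a * y1 x + b * y2 x) * pd \<phi> i x)
      = - (LINT x:D|lebesgue. (a *\<^sub>R G1 x + b *\<^sub>R G2 x) $ i * \<phi> x)"
    unfolding y_eq G_eq set_integral_lin[OF y] set_integral_lin[OF G] eq by simp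
qed

lemma H1_sqdist_lin_le:
  assumes D: "D \<in> sets lebesgue" and y: "y1 \<in> L2 D" "y2 \<in> L2 D"
    and G: "\<And>i. (\<lambda>x. G1 x $ i) \<in> L2 D" "\<And>i. (\<lambda>x. G2 x $ i) \<in> L2 D"
    and t: "test_fn D \<psi>1" "test_fn D \<psi>2"
  shows "H1_sqdist D (\<lambda>x. a * y1 x + b * y2 x) (\<lambda>x. a *\<^sub>R G1 x + b *\<^sub>R G2 x)
      (\<lambda>x. a * \<psi>1 x + b * \<psi>2 x)
    \<le> 2 * a\<^sup>2 * H1_sqdist D y1 G1 \<psi>1 + 2 * b\<^sup>2 * H1_sqdist D y2 G2 \<psi>2"
proof -
  have sm: "smooth_fun \<psi>1" "smooth_fun \<psi>2" using t unfolding test_fn_def by blast+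
  have "(\<lambda>x. (a * y1 x + b * y2 x) - (a * \<psi>1 x + b * \<psi>2 x))
      = (\<lambda>x. a * (y1 x - \<psi>1 x) + b * (y2 x - \<psi>2 x))"
    by (simp add: algebra_simps)
  then have v: "L2_inner D (\<lambda>x. (a * y1 x + b * y2 x) - (a * \<psi>1 x + b * \<psi>2 x))
      (\<lambda>x. (a * y1 x + b * y2 x) - (a * \<psi>1 x + b * \<psi>2 x))
    \<le> 2 * a\<^sup>2 * L2_inner D (\<lambda>x. y1 x - \<psi>1 x) (\<lambda>x. y1 x - \<psi>1 x)
      + 2 * b\<^sup>2 * L2_inner D (\<lambda>x. y2 x - \<psi>2 x) (\<lambda>x. y2 x - \<psi>2 x)"
    using L2_inner_self_lin_le[OF D L2_diff[OF D y(1) test_fn_L2[OF D t(1)]]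
        L2_diff[OF D y(2) test_fn_L2[OF D t(2)]]] by simp
  have "(\<lambda>x. (a *\<^sub>R G1 x + b *\<^sub>R G2 x) $ i - pd (\<lambda>x. a * \<psi>1 x + b * \<psi>2 x) i x)
      = (\<lambda>x. a * (G1 x $ i - pd \<psi>1 i x) + b * (G2 x $ i - pd \<psi>2 i x))" for i
    by (simp add: pd_lin[OF sm] algebra_simps)
  then have w: "L2_inner D (\<lambda>x. (a *\<^sub>R G1 x + b *\<^sub>R G2 x) $ i - pd (\<lambda>x. a * \<psi>1 x + b * \<psi>2 x) i x)
      (\<lambda>x. (a *\<^sub>R G1 x + b *\<^sub>R G2 x) $ i - pd (\<lambda>x. a * \<psi>1 x + b * \<psi>2 x) i x)
    \<le> 2 * a\<^sup>2 * L2_inner D (\<lambda>x. G1 x $ i - pd \<psi>1 i x) (\<lambda>x. G1 x $ i - pd \<psi>1 i x)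
      + 2 * b\<^sup>2 * L2_inner D (\<lambda>x. G2 x $ i - pd \<psi>2 i x) (\<lambda>x. G2 x $ i - pd \<psi>2 i x)" for i
    using L2_inner_self_lin_le[OF D L2_diff[OF D G(1) test_fn_L2[OF D test_fn_pd[OF t(1)]]]
        L2_diff[OF D G(2) test_fn_L2[OF D test_fn_pd[OF t(2)]]]] by simp
  have "H1_sqdist D (\<lambda>x. a * y1 x + b * y2 x) (\<lambda>x. a *\<^sub>R G1 x + b *\<^sub>R G2 x)
      (\<lambda>x. a * \<psi>1 x + b * \<psi>2 x)
    \<le> (2 * a\<^sup>2 * L2_inner D (\<lambda>x. y1 x - \<psi>1 x) (\<lambda>x. y1 x - \<psi>1 x)
      + 2 * b\<^sup>2 * L2_inner D (\<lambda>x. y2 x - \<psi>2 x) (\<lambda>x. y2 x - \<psi>2 x))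
      + (\<Sum>i\<in>UNIV. 2 * a\<^sup>2 * L2_inner D (\<lambda>x. G1 x $ i - pd \<psi>1 i x) (\<lambda>x. G1 x $ i - pd \<psi>1 i x)
      + 2 * b\<^sup>2 * L2_inner D (\<lambda>x. G2 x $ i - pd \<psi>2 i x) (\<lambda>x. G2 x $ i - pd \<psi>2 i x))"
    unfolding H1_sqdist_def by (rule add_mono[OF v sum_mono[OF w]])
  also have "\<dots> = 2 * a\<^sup>2 * H1_sqdist D y1 G1 \<psi>1 + 2 * b\<^sup>2 * H1_sqdist D y2 G2 \<psi>2"
    unfolding H1_sqdist_def by (simp add: sum.distrib sum_distrib_left algebra_simps)
  finally show ?thesis .
qed

lemma H01_lin:
  assumes D: "D \<in> sets lebesgue" and "y1 \<in> H01 D" and "y2 \<in> H01 D"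
  shows "(\<lambda>x. a * y1 x + b * y2 x) \<in> H01 D"
proof -
  obtain G1 \<psi>1 where y1: "y1 \<in> L2 D" "weak_grad D y1 G1" "\<And>i. (\<lambda>x. G1 x $ i) \<in> L2 D"
    and t1: "\<And>k. test_fn D (\<psi>1 k)" and lim1: "(\<lambda>k. H1_sqdist D y1 G1 (\<psi>1 k)) \<longlonglongrightarrow> 0"
    using assms(2) unfolding mem_H01_iff[OF D] by blast
  obtain G2 \<psi>2 where y2: "y2 \<in> L2 D" "weak_grad D y2 G2" "\<And>i. (\<lambda>x. G2 x $ i) \<in> L2 D"
    and t2: "\<And>k. test_fn D (\<psi>2 k)" and lim2: "(\<lambda>k. H1_sqdist D y2 G2 (\<psi>2 k)) \<longlonglongrightarrow> 0"
    using assms(3) unfolding mem_H01_iff[OF D] by blast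
  have "(\<lambda>k. 2 * a\<^sup>2 * H1_sqdist D y1 G1 (\<psi>1 k) + 2 * b\<^sup>2 * H1_sqdist D y2 G2 (\<psi>2 k)) \<longlonglongrightarrow> 0"
    using tendsto_add[OF tendsto_mult_right_zero[OF lim1] tendsto_mult_right_zero[OF lim2]] by simp
  then have "(\<lambda>k. H1_sqdist D (\<lambda>x. a * y1 x + b * y2 x) (\<lambda>x. a *\<^sub>R G1 x + b *\<^sub>R G2 x)
      (\<lambda>x. a * \<psi>1 k x + b * \<psi>2 k x)) \<longlonglongrightarrow> 0"
    by (rule tendsto_sandwich[OF always_eventually always_eventually tendsto_const, rotated 2])
      (simp_all add: H1_sqdist_nonneg H1_sqdist_lin_le[OF D y1(1) y2(1) y1(3) y2(3) t1 t2])
  moreover have "(\<lambda>x. (a *\<^sub>R G1 x + b *\<^sub>R G2 x) $ i) \<in> L2 D" for i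
    using L2_lin[OF D y1(3) y2(3)] by simp
  ultimately show ?thesis
    unfolding mem_H01_iff[OF D]
    using L2_lin[OF D y1(1) y2(1)] weak_grad_lin[OF y1(2) y2(2)] test_fn_lin[OF t1 t2]
    by (intro conjI exI[of _ "\<lambda>x. a *\<^sub>R G1 x + b *\<^sub>R G2 x"]
        exI[of _ "\<lambda>k x. a * \<psi>1 k x + b * \<psi>2 k x"] allI) auto
qed

lemma weak_grad_integral_sum:
  assumes "weak_grad D y G" and "test_fn D \<phi>"
  shows "(LINT x:D|lebesgue. (\<Sum>i\<in>UNIV. G x $ i * pd \<phi> i x))
    = (\<Sum>i\<in>UNIV. L2_inner D (\<lambda>x. G x $ i) (pd \<phi> i))"
  unfolding L2_inner_def
proof (rule set_integral_sum)
  fix i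
  show "set_integrable lebesgue D (\<lambda>x. G x $ i * pd \<phi> i x)"
    using assms(1) test_fn_pd[OF assms(2)] unfolding weak_grad_def by blast
qed

text \<open>All weak gradients of \<open>y\<close> pair in the same way with \<open>\<partial>\<^sub>i\<phi>\<close>: test the definition
  with the test function \<open>\<partial>\<^sub>i\<phi>\<close>.\<close>

lemma weak_grad_inner_pd_unique:
  assumes "weak_grad D y G" and "weak_grad D y G'" and "test_fn D \<phi>"
  shows "L2_inner D (\<lambda>x. G x $ i) (pd \<phi> i) = L2_inner D (\<lambda>x. G' x $ i) (pd \<phi> i)"
proof -
  have "(LINT x:D|lebesgue. y x * pd (pd \<phi> i) i x) = - L2_inner D (\<lambda>x. H x $ i) (pd \<phi> i)"
    if "weak_grad D y H" for H
    using that test_fn_pd[OF assms(3)] unfolding weak_grad_def L2_inner_def by blast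
  from this[OF assms(1)] this[OF assms(2)] show ?thesis by simp
qed

lemma poisson_sol_weak_form:
  assumes "poisson_sol D h y" and "weak_grad D y G" and "test_fn D \<phi>"
  shows "(\<Sum>i\<in>UNIV. L2_inner D (\<lambda>x. G x $ i) (pd \<phi> i)) = L2_inner D h \<phi>"
proof -
  obtain G' where G': "weak_grad D y G'" and eq: "(LINT x:D|lebesgue. (\<Sum>i\<in>UNIV. G' x $ i * pd \<phi> i x))
      = (LINT x:D|lebesgue. h x * \<phi> x)"
    using assms(1,3) unfolding poisson_sol_def by blast
  have "(\<Sum>i\<in>UNIV. L2_inner D (\<lambda>x. G x $ i) (pd \<phi> i))
      = (\<Sum>i\<in>UNIV. L2_inner D (\<lambda>x. G' x $ i) (pd \<phi> i))"
    using weak_grad_inner_pd_unique[OF assms(2) G' assms(3)] by simp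
  also have "\<dots> = L2_inner D h \<phi>"
    using eq weak_grad_integral_sum[OF G' assms(3)] unfolding L2_inner_def by simp
  finally show ?thesis .
qed

lemma poisson_solI:
  assumes "y \<in> H01 D" and "continuous_on (closure D) y" and "\<forall>x\<in>frontier D. y x = 0"
    and "weak_grad D y G"
    and "\<And>\<phi>. test_fn D \<phi> \<Longrightarrow> (\<Sum>i\<in>UNIV. L2_inner D (\<lambda>x. G x $ i) (pd \<phi> i)) = L2_inner D h \<phi>"
  shows "poisson_sol D h y"
  unfolding poisson_sol_def
  using assms weak_grad_integral_sum[OF assms(4)] unfolding L2_inner_def by auto

lemma poisson_sol_lin:
  assumes D: "D \<in> sets lebesgue" and h: "h1 \<in> L2 D" "h2 \<in> L2 D"
    and y: "poisson_sol D h1 y1" "poisson_sol D h2 y2"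
  shows "poisson_sol D (\<lambda>x. a * h1 x + b * h2 x) (\<lambda>x. a * y1 x + b * y2 x)"
proof -
  have H: "y1 \<in> H01 D" "y2 \<in> H01 D" using y unfolding poisson_sol_def by blast+
  obtain G1 where G1: "weak_grad D y1 G1" "\<And>i. (\<lambda>x. G1 x $ i) \<in> L2 D"
    using H(1) unfolding mem_H01_iff[OF D] by blast
  obtain G2 where G2: "weak_grad D y2 G2" "\<And>i. (\<lambda>x. G2 x $ i) \<in> L2 D"
    using H(2) unfolding mem_H01_iff[OF D] by blast
  show ?thesis
  proof (rule poisson_solI[OF H01_lin[OF D H] _ _ weak_grad_lin[OF G1(1) G2(1)]])
    show "continuous_on (closure D) (\<lambda>x. a * y1 x + b * y2 x)"
      using y unfolding poisson_sol_def by (auto intro!: continuous_intros)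
    show "\<forall>x\<in>frontier D. a * y1 x + b * y2 x = 0"
      using y unfolding poisson_sol_def by simp
    fix \<phi> assume t: "test_fn D \<phi>"
    have \<phi>: "\<phi> \<in> L2 D" and pd\<phi>: "pd \<phi> i \<in> L2 D" for i
      using test_fn_L2[OF D] test_fn_pd t by blast+
    have "(\<Sum>i\<in>UNIV. L2_inner D (\<lambda>x. (a *\<^sub>R G1 x + b *\<^sub>R G2 x) $ i) (pd \<phi> i))
        = a * (\<Sum>i\<in>UNIV. L2_inner D (\<lambda>x. G1 x $ i) (pd \<phi> i))
          + b * (\<Sum>i\<in>UNIV. L2_inner D (\<lambda>x. G2 x $ i) (pd \<phi> i))"
      using L2_inner_lin_left[OF D G1(2) G2(2) pd\<phi>]
      by (simp add: sum.distrib sum_distrib_left)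
    also have "\<dots> = a * L2_inner D h1 \<phi> + b * L2_inner D h2 \<phi>"
      using poisson_sol_weak_form[OF y(1) G1(1) t] poisson_sol_weak_form[OF y(2) G2(1) t] by simp
    also have "\<dots> = L2_inner D (\<lambda>x. a * h1 x + b * h2 x) \<phi>"
      by (rule L2_inner_lin_left[OF D h \<phi>, symmetric])
    finally show "(\<Sum>i\<in>UNIV. L2_inner D (\<lambda>x. (a *\<^sub>R G1 x + b *\<^sub>R G2 x) $ i) (pd \<phi> i))
        = L2_inner D (\<lambda>x. a * h1 x + b * h2 x) \<phi>" .
  qed
qed

lemma grad_sqnorm_le_H1_sqdist:
  assumes D: "D \<in> sets lebesgue" and G: "\<And>i. (\<lambda>x. G x $ i) \<in> L2 D" and t: "test_fn D \<psi>"
    and orth: "(\<Sum>i\<in>UNIV. L2_inner D (\<lambda>x. G x $ i) (pd \<psi> i)) = 0"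
  shows "(\<Sum>i\<in>UNIV. L2_inner D (\<lambda>x. G x $ i) (\<lambda>x. G x $ i)) \<le> H1_sqdist D y G \<psi>"
proof -
  define Q where "Q = (\<Sum>i\<in>UNIV. L2_inner D (\<lambda>x. G x $ i) (\<lambda>x. G x $ i))"
  define E where "E = (\<Sum>i\<in>UNIV. L2_inner D (\<lambda>x. G x $ i - pd \<psi> i x) (\<lambda>x. G x $ i - pd \<psi> i x))"
  have pd\<psi>: "pd \<psi> i \<in> L2 D" for i by (rule test_fn_L2[OF D test_fn_pd[OF t]])
  have R: "(\<lambda>x. G x $ i - pd \<psi> i x) \<in> L2 D" for i by (rule L2_diff[OF D G pd\<psi>])
  have "L2_inner D (\<lambda>x. G x $ i) (\<lambda>x. G x $ i) = L2_inner D (\<lambda>x. G x $ i - pd \<psi> i x) (\<lambda>x. G x $ i)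
      + L2_inner D (\<lambda>x. G x $ i) (pd \<psi> i)" for i
    using L2_inner_lin_left[OF D R[of i] pd\<psi>[of i] G[of i], where a = 1 and b = 1] by (simp add: L2_inner_commute[of D "pd \<psi> i"])
  then have "Q = (\<Sum>i\<in>UNIV. L2_inner D (\<lambda>x. G x $ i - pd \<psi> i x) (\<lambda>x. G x $ i))"
    unfolding Q_def using orth by (simp add: sum.distrib)
  also have "\<dots> \<le> (\<Sum>i\<in>UNIV. (L2_inner D (\<lambda>x. G x $ i - pd \<psi> i x) (\<lambda>x. G x $ i - pd \<psi> i x)
      + L2_inner D (\<lambda>x. G x $ i) (\<lambda>x. G x $ i)) / 2)"
    by (rule sum_mono) (rule L2_inner_le[OF D R G])
  also have "\<dots> = (E + Q) / 2"
    unfolding E_def Q_def sum_divide_distrib[symmetric] sum.distrib ..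
  finally have "Q \<le> E" by simp
  moreover have "E \<le> H1_sqdist D y G \<psi>"
    unfolding E_def H1_sqdist_def using L2_inner_self_nonneg by simp
  ultimately show ?thesis unfolding Q_def by simp
qed

lemma L2_sqnorm_le_H1_sqdist:
  assumes D: "D \<in> sets lebesgue" and R: "0 < R" and DR: "D \<subseteq> ball 0 R"
    and y: "y \<in> L2 D" and G: "\<And>i. (\<lambda>x. G x $ i) \<in> L2 D" and t: "test_fn D \<psi>"
  shows "L2_inner D y y \<le> (2 + 16 * R\<^sup>2) * H1_sqdist D y G \<psi>
    + 16 * R\<^sup>2 * (\<Sum>i\<in>UNIV. L2_inner D (\<lambda>x. G x $ i) (\<lambda>x. G x $ i))"
proof -
  fix i \<comment> \<open>any coordinate direction serves in the Poincare inequality\<close>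
  define E0 where "E0 = L2_inner D (\<lambda>x. y x - \<psi> x) (\<lambda>x. y x - \<psi> x)"
  define E1 where "E1 = (\<Sum>i\<in>UNIV. L2_inner D (\<lambda>x. G x $ i - pd \<psi> i x) (\<lambda>x. G x $ i - pd \<psi> i x))"
  define Q where "Q = (\<Sum>i\<in>UNIV. L2_inner D (\<lambda>x. G x $ i) (\<lambda>x. G x $ i))"
  have \<psi>: "\<psi> \<in> L2 D" and pd\<psi>: "pd \<psi> i \<in> L2 D"
    using test_fn_L2[OF D] t test_fn_pd by blast+
  have y\<psi>: "(\<lambda>x. y x - \<psi> x) \<in> L2 D" and G\<psi>: "(\<lambda>x. G x $ i - pd \<psi> i x) \<in> L2 D"
    using L2_diff[OF D y \<psi>] L2_diff[OF D G pd\<psi>] .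
  have E0: "0 \<le> E0" and E1: "0 \<le> E1"
    unfolding E0_def E1_def by (simp_all add: L2_inner_self_nonneg sum_nonneg)
  have "L2_inner D y y = L2_inner D (\<lambda>x. 1 * (y x - \<psi> x) + 1 * \<psi> x) (\<lambda>x. 1 * (y x - \<psi> x) + 1 * \<psi> x)"
    by simp
  also have "\<dots> \<le> 2 * E0 + 2 * L2_inner D \<psi> \<psi>"
    unfolding E0_def using L2_inner_self_lin_le[OF D y\<psi> \<psi>, where a = 1 and b = 1] by simp
  finally have y_le: "L2_inner D y y \<le> 2 * E0 + 2 * L2_inner D \<psi> \<psi>" .
  have "L2_inner D (pd \<psi> i) (pd \<psi> i)
      = L2_inner D (\<lambda>x. (-1) * (G x $ i - pd \<psi> i x) + 1 * G x $ i)
          (\<lambda>x. (-1) * (G x $ i - pd \<psi> i x) + 1 * G x $ i)"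
    by simp
  also have "\<dots> \<le> 2 * L2_inner D (\<lambda>x. G x $ i - pd \<psi> i x) (\<lambda>x. G x $ i - pd \<psi> i x)
      + 2 * L2_inner D (\<lambda>x. G x $ i) (\<lambda>x. G x $ i)"
    using L2_inner_self_lin_le[OF D G\<psi> G[of i], where a = "-1" and b = 1] by simp
  also have "\<dots> \<le> 2 * E1 + 2 * Q"
    unfolding E1_def Q_def
    by (intro add_mono mult_left_mono member_le_sum) (simp_all add: L2_inner_self_nonneg)
  finally have "4 * R\<^sup>2 * L2_inner D (pd \<psi> i) (pd \<psi> i) \<le> 4 * R\<^sup>2 * (2 * E1 + 2 * Q)"
    by (simp add: mult_left_mono)
  with test_fn_poincare[OF t R DR, of i]
  have "L2_inner D \<psi> \<psi> \<le> 8 * R\<^sup>2 * E1 + 8 * R\<^sup>2 * Q" by (simp add: algebra_simps)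
  moreover have "0 \<le> R\<^sup>2 * E0" using E0 by simp
  ultimately have "L2_inner D y y \<le> (2 + 16 * R\<^sup>2) * (E0 + E1) + 16 * R\<^sup>2 * Q"
    using y_le E1 by (simp add: algebra_simps)
  then show ?thesis unfolding E0_def E1_def Q_def H1_sqdist_def .
qed

lemma poisson_sol_zero_data:
  assumes D: "open D" "bounded D" and y: "poisson_sol D h y" and h: "\<And>x. x \<in> D \<Longrightarrow> h x = 0"
    and x: "x \<in> closure D"
  shows "y x = 0"
proof -
  have DL: "D \<in> sets lebesgue" by (rule open_imp_sets_lebesgue[OF D(1)])
  obtain R where R: "0 < R" "D \<subseteq> ball 0 R" using bounded_subset_ballD[OF D(2)] by blast
  obtain G \<psi> where yL: "y \<in> L2 D" and G: "weak_grad D y G" "\<And>i. (\<lambda>x. G x $ i) \<in> L2 D"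
    and t: "\<And>k. test_fn D (\<psi> k)" and lim: "(\<lambda>k. H1_sqdist D y G (\<psi> k)) \<longlonglongrightarrow> 0"
    using y unfolding poisson_sol_def mem_H01_iff[OF DL] by blast
  define Q where "Q = (\<Sum>i\<in>UNIV. L2_inner D (\<lambda>x. G x $ i) (\<lambda>x. G x $ i))"
  have orth: "(\<Sum>i\<in>UNIV. L2_inner D (\<lambda>x. G x $ i) (pd (\<psi> k) i)) = 0" for k
    using poisson_sol_weak_form[OF y G(1) t] L2_inner_eq_0[of D h] h by simp
  have "Q \<le> 0"
    using grad_sqnorm_le_H1_sqdist[OF DL G(2) t orth] unfolding Q_def
    by (intro LIMSEQ_le_const[OF lim]) auto
  moreover have "0 \<le> Q" unfolding Q_def by (intro sum_nonneg L2_inner_self_nonneg)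
  ultimately have Q: "Q = 0" by simp
  have "(\<lambda>k. (2 + 16 * R\<^sup>2) * H1_sqdist D y G (\<psi> k)) \<longlonglongrightarrow> 0"
    by (rule tendsto_mult_right_zero[OF lim])
  moreover have "L2_inner D y y \<le> (2 + 16 * R\<^sup>2) * H1_sqdist D y G (\<psi> k)" for k
    using L2_sqnorm_le_H1_sqdist[OF DL R yL G(2) t] Q unfolding Q_def by simp
  ultimately have "L2_inner D y y \<le> 0"
    by (intro LIMSEQ_le_const) auto
  then have "AE x in lebesgue. x \<in> D \<longrightarrow> y x = 0"
    using L2_inner_self_eq_0_AE[OF DL yL] L2_inner_self_nonneg[of D y] by simp
  then have AE: "AE x \<in> D in lebesgue. x \<in> {x \<in> closure D. y x = 0}"
    by eventually_elim (auto intro: closure_subset[THEN subsetD])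
  have closed: "closed {x \<in> closure D. y x = 0}"
    using y unfolding poisson_sol_def by (intro continuous_closed_preimage_constant) auto
  have "y x = 0" if "x \<in> D" for x
    using mem_closed_if_AE_lebesgue_open[OF D(1) closed AE that] by blast
  moreover have "y x = 0" if "x \<in> frontier D"
    using y that unfolding poisson_sol_def by blast
  ultimately show ?thesis
    using x unfolding closure_Un_frontier by blast
qed

lemma poisson_sol_unique:
  assumes D: "open D" "bounded D" and h: "h \<in> L2 D"
    and y: "poisson_sol D h y1" "poisson_sol D h y2" and x: "x \<in> closure D"
  shows "y1 x = y2 x"
  using poisson_sol_zero_data[OF D poisson_sol_lin[OF open_imp_sets_lebesgue[OF D(1)] h h y,
      where a = 1 and b = "-1"] _ x]
  by simp

section \<open>The solution operator\<close>

locale poisson_solver =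
  fixes D :: "(real^'n) set" and Ainv :: "(real^'n \<Rightarrow> real) \<Rightarrow> real^'n \<Rightarrow> real"
  assumes open_D: "open D" and bounded_D: "bounded D"
    and poisson_sol_Ainv: "\<And>h. h \<in> L2 D \<Longrightarrow> poisson_sol D h (Ainv h)"
begin

lemma sets_lebesgue_D: "D \<in> sets lebesgue"
  by (rule open_imp_sets_lebesgue[OF open_D])

lemma continuous_on_Ainv: "h \<in> L2 D \<Longrightarrow> continuous_on (closure D) (Ainv h)"
  using poisson_sol_Ainv unfolding poisson_sol_def by blast

lemma Ainv_lin:
  assumes h: "h1 \<in> L2 D" "h2 \<in> L2 D" and x: "x \<in> closure D"
  shows "Ainv (\<lambda>x. a * h1 x + b * h2 x) x = a * Ainv h1 x + b * Ainv h2 x"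
  using poisson_sol_unique[OF open_D bounded_D L2_lin[OF sets_lebesgue_D h]
      poisson_sol_Ainv[OF L2_lin[OF sets_lebesgue_D h]]
      poisson_sol_lin[OF sets_lebesgue_D h poisson_sol_Ainv[OF h(1)] poisson_sol_Ainv[OF h(2)]] x] .

lemma Ainv_sum:
  assumes "finite I" and "\<And>i. i \<in> I \<Longrightarrow> h i \<in> L2 D" and x: "x \<in> closure D"
  shows "Ainv (\<lambda>x. \<Sum>i\<in>I. c i * h i x) x = (\<Sum>i\<in>I. c i * Ainv (h i) x)"
  using assms(1,2)
proof (induction I rule: finite_induct)
  case empty
  have "(\<lambda>x. 0) \<in> L2 D" by (simp add: L2_def)
  then show ?case
    using poisson_sol_zero_data[OF open_D bounded_D poisson_sol_Ainv _ x] by simp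
next
  case (insert j I)
  then have "Ainv (\<lambda>x. c j * h j x + 1 * (\<Sum>i\<in>I. c i * h i x)) x
      = c j * Ainv (h j) x + 1 * Ainv (\<lambda>x. \<Sum>i\<in>I. c i * h i x) x"
    by (intro Ainv_lin x L2_sum[OF sets_lebesgue_D]) auto
  with insert show ?case by simp
qed

lemma Shat_eq:
  assumes u: "u \<in> L2 D" and f0: "f0 \<in> L2 D" and \<phi>: "\<And>i. \<phi> i \<in> L2 D" and x: "x \<in> closure D"
  shows "Shat Ainv f0 \<phi> u (x, z) = Ainv (\<lambda>x. u x + f0 x) x + (\<Sum>i\<in>UNIV. z $ i * Ainv (\<phi> i) x)"
proof -
  have uf0: "(\<lambda>x. u x + f0 x) \<in> L2 D"
    using L2_lin[OF sets_lebesgue_D u f0, where a = 1 and b = 1] by simp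
  have sum: "(\<lambda>x. \<Sum>i\<in>UNIV. z $ i * \<phi> i x) \<in> L2 D"
    by (rule L2_sum[OF sets_lebesgue_D finite_class.finite_UNIV \<phi>])
  have "Shat Ainv f0 \<phi> u (x, z)
      = Ainv (\<lambda>x. 1 * (u x + f0 x) + 1 * (\<Sum>i\<in>UNIV. z $ i * \<phi> i x)) x"
    unfolding Shat_def by (simp add: rhs_f_def add.assoc)
  also have "\<dots> = 1 * Ainv (\<lambda>x. u x + f0 x) x + 1 * Ainv (\<lambda>x. \<Sum>i\<in>UNIV. z $ i * \<phi> i x) x"
    by (rule Ainv_lin[OF uf0 sum x])
  also have "Ainv (\<lambda>x. \<Sum>i\<in>UNIV. z $ i * \<phi> i x) x = (\<Sum>i\<in>UNIV. z $ i * Ainv (\<phi> i) x)"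
    by (rule Ainv_sum[OF finite_class.finite_UNIV \<phi> x])
  finally show ?thesis by simp
qed

lemma continuous_on_Shat:
  assumes u: "u \<in> L2 D" and f0: "f0 \<in> L2 D" and \<phi>: "\<And>i. \<phi> i \<in> L2 D"
  shows "continuous_on (closure D \<times> \<Xi>) (Shat Ainv f0 \<phi> u)"
proof -
  have uf0: "(\<lambda>x. u x + f0 x) \<in> L2 D"
    using L2_lin[OF sets_lebesgue_D u f0, where a = 1 and b = 1] by simp
  have "continuous_on (closure D \<times> \<Xi>)
      (\<lambda>p. Ainv (\<lambda>x. u x + f0 x) (fst p) + (\<Sum>i\<in>UNIV. snd p $ i * Ainv (\<phi> i) (fst p)))"
    using continuous_on_Ainv[OF uf0] continuous_on_Ainv[OF \<phi>]
    by (auto intro!: continuous_intros continuous_on_compose2[of "closure D" _ _ fst])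
  then show ?thesis
    by (rule continuous_on_eq) (auto simp: Shat_eq[OF u f0 \<phi>])
qed

end

section \<open>Measures on a compact set\<close>

lemma INF_mult_left_ennreal:
  fixes c :: ennreal and f :: "'i \<Rightarrow> ennreal"
  assumes c: "c < top" and I: "I \<noteq> {}"
  shows "c * (INF i\<in>I. f i) = (INF i\<in>I. c * f i)"
proof -
  have "(\<lambda>x. c * x) (Inf (f ` I)) = Inf ((\<lambda>x. c * x) ` (f ` I))"
  proof (rule continuous_at_Inf_mono)
    show "mono (\<lambda>x::ennreal. c * x)" by (auto simp: mono_def mult_left_mono)
    show "continuous (at_right (Inf (f ` I))) (\<lambda>x. c * x)"
      using ennreal_continuous_on_cmult[OF c continuous_on_id]
      by (simp add: continuous_on_eq_continuous_within continuous_at_imp_continuous_at_within)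
  qed (use I in simp_all)
  then show ?thesis by (simp add: image_comp)
qed

lemma regular_measure_scale:
  assumes reg: "regular_measure \<mu>" and c: "c < top"
  shows "regular_measure (scale_measure c \<mu>)"
  unfolding regular_measure_def
proof (intro ballI conjI)
  fix A assume "A \<in> sets (scale_measure c \<mu>)"
  then have outer: "emeasure \<mu> A = (INF U\<in>{U. open U \<and> A \<subseteq> U}. emeasure \<mu> U)"
    and inner: "emeasure \<mu> A = (SUP K\<in>{K. compact K \<and> K \<subseteq> A}. emeasure \<mu> K)"
    using reg unfolding regular_measure_def by auto
  have "{U. open U \<and> A \<subseteq> U} \<noteq> {}" by auto
  then show "emeasure (scale_measure c \<mu>) A
      = (INF U\<in>{U. open U \<and> A \<subseteq> U}. emeasure (scale_measure c \<mu>) U)"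
    by (simp add: outer INF_mult_left_ennreal[OF c])
  show "emeasure (scale_measure c \<mu>) A
      = (SUP K\<in>{K. compact K \<and> K \<subseteq> A}. emeasure (scale_measure c \<mu>) K)"
    by (simp add: inner SUP_mult_left_ennreal)
qed

lemma regular_measure_return:
  fixes p0 :: "'a::metric_space"
  shows "regular_measure (return borel p0)"
  unfolding regular_measure_def
proof (intro ballI conjI)
  fix A assume "A \<in> sets (return borel p0)"
  then have em: "emeasure (return borel p0) A = indicator A p0" by simp
  show "emeasure (return borel p0) A
      = (INF U\<in>{U. open U \<and> A \<subseteq> U}. emeasure (return borel p0) U)"
  proof (cases "p0 \<in> A")
    case True
    then have "(INF U\<in>{U. open U \<and> A \<subseteq> U}. emeasure (return borel p0) U) = 1"
      by (intro antisym INF_greatest INF_lower2[of UNIV]) auto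
    then show ?thesis using True em by simp
  next
    case False
    then have "(INF U\<in>{U. open U \<and> A \<subseteq> U}. emeasure (return borel p0) U) = 0"
      by (intro antisym INF_lower2[of "- {p0}"]) auto
    then show ?thesis using False em by simp
  qed
  show "emeasure (return borel p0) A
      = (SUP K\<in>{K. compact K \<and> K \<subseteq> A}. emeasure (return borel p0) K)"
  proof (cases "p0 \<in> A")
    case True
    then have "(SUP K\<in>{K. compact K \<and> K \<subseteq> A}. emeasure (return borel p0) K) = 1"
      by (intro antisym SUP_least SUP_upper2[of "{p0}"])
        (auto simp: compact_imp_closed borel_closed indicator_def)
    then show ?thesis using True em by simp
  next
    case False
    then have "(SUP K\<in>{K. compact K \<and> K \<subseteq> A}. emeasure (return borel p0) K) = 0"
      by (intro antisym SUP_least) (auto simp: compact_imp_closed borel_closed indicator_def subset_iff)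
    then show ?thesis using False em by simp
  qed
qed

lemma measure_support_return: "measure_support (return borel (p0::'a::metric_space)) \<subseteq> {p0}"
proof
  fix q assume "q \<in> measure_support (return borel p0)"
  then show "q \<in> {p0}"
    unfolding measure_support_def by (cases "q = p0") (auto dest!: spec[of _ "dist q p0"])
qed

lemma measure_support_scale:
  assumes "c \<noteq> 0"
  shows "measure_support (scale_measure c \<mu>) = measure_support \<mu>"
proof -
  have "0 < c" using assms by (simp add: zero_less_iff_neq_zero)
  then show ?thesis unfolding measure_support_def by (simp add: ennreal_zero_less_mult_iff)
qed

text \<open>The complement of the support is a union of open null balls; by Lindelof countably
  many of them suffice.\<close>

lemma measure_support_compl_null:
  fixes \<mu> :: "'a::{metric_space, second_countable_topology} measure"
  assumes sets: "sets \<mu> = sets borel"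
  shows "- measure_support \<mu> \<in> null_sets \<mu>"
proof -
  define F where "F = {ball p e | p e. 0 < e \<and> emeasure \<mu> (ball p e) = 0}"
  have "- measure_support \<mu> \<subseteq> \<Union>F"
  proof
    fix x assume "x \<in> - measure_support \<mu>"
    then obtain e where "0 < e" "emeasure \<mu> (ball x e) = 0"
      unfolding measure_support_def by (auto simp: not_gr_zero)
    then show "x \<in> \<Union>F" unfolding F_def by (intro UnionI[of "ball x e"]) auto
  qed
  moreover have "\<Union>F \<subseteq> - measure_support \<mu>"
  proof
    fix x assume "x \<in> \<Union>F"
    then obtain p e where "emeasure \<mu> (ball p e) = 0" and x: "x \<in> ball p e"
      unfolding F_def by auto
    moreover have "ball x (e - dist p x) \<subseteq> ball p e"
    proof
      fix q assume "q \<in> ball x (e - dist p x)"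
      then show "q \<in> ball p e" using dist_triangle[of p q x] by simp
    qed
    ultimately have "emeasure \<mu> (ball x (e - dist p x)) = 0"
      using emeasure_mono[of "ball x (e - dist p x)" "ball p e" \<mu>] sets by simp
    moreover have "0 < e - dist p x" using x by simp
    ultimately show "x \<in> - measure_support \<mu>"
      unfolding measure_support_def by (intro ComplI notI) (auto dest!: spec[of _ "e - dist p x"])
  qed
  moreover obtain F' where "F' \<subseteq> F" "countable F'" "\<Union>F' = \<Union>F"
    using Lindelof[of F] unfolding F_def by auto
  moreover have "(\<Union>N\<in>F'. N) \<in> null_sets \<mu>"
    using \<open>F' \<subseteq> F\<close> sets unfolding F_def
    by (intro null_sets_UN'[OF \<open>countable F'\<close>]) (auto intro!: null_setsI)
  ultimately show ?thesis by simp
qed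

lemma AE_mem_closed_iff_measure_support_subset:
  fixes \<mu> :: "'a::{metric_space, second_countable_topology} measure"
  assumes sets: "sets \<mu> = sets borel" and C: "closed C"
  shows "(AE p in \<mu>. p \<in> C) \<longleftrightarrow> measure_support \<mu> \<subseteq> C"
proof
  assume AE: "AE p in \<mu>. p \<in> C"
  show "measure_support \<mu> \<subseteq> C"
  proof
    fix p assume p: "p \<in> measure_support \<mu>"
    show "p \<in> C"
    proof (rule ccontr)
      assume "p \<notin> C"
      then obtain e where e: "0 < e" "ball p e \<subseteq> - C"
        using C open_contains_ball[of "- C"] by auto
      have "AE q in \<mu>. q \<notin> ball p e"
        using eventually_mono[OF AE, of "\<lambda>q. q \<notin> ball p e"] e(2) by blast
      then have "emeasure \<mu> (ball p e) = 0"
        using sets by (subst (asm) AE_iff_measurable[OF _ refl]) (auto simp: sets_eq_imp_space_eq ball_def)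
      then show False using p e(1) unfolding measure_support_def by auto
    qed
  qed
next
  assume "measure_support \<mu> \<subseteq> C"
  then show "AE p in \<mu>. p \<in> C"
    using eventually_mono[OF AE_not_in[OF measure_support_compl_null[OF sets]], of "\<lambda>p. p \<in> C"]
    by blast
qed

lemma AE_mem_iff_emeasure_compl_eq_0:
  assumes sets: "sets \<mu> = sets borel" and K: "K \<in> sets borel"
  shows "(AE p in \<mu>. p \<in> K) \<longleftrightarrow> emeasure \<mu> (UNIV - K) = 0"
  using K sets by (subst AE_iff_measurable[OF _ refl]) (auto simp: sets_eq_imp_space_eq set_diff_eq)

lemma borel_measurable_indicator_continuous_on:
  fixes f :: "'a::topological_space \<Rightarrow> real"
  assumes sets: "sets \<mu> = sets borel" and K: "closed K" and f: "continuous_on K f"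
  shows "(\<lambda>x. indicator K x *\<^sub>R f x) \<in> borel_measurable \<mu>"
  unfolding measurable_cong_sets[OF sets refl]
  by (rule borel_measurable_continuous_on_indicator[OF borel_closed[OF K] f])

lemma set_integral_scale_measure:
  fixes f :: "'a \<Rightarrow> real"
  assumes r: "0 \<le> r" and f: "(\<lambda>x. indicator K x *\<^sub>R f x) \<in> borel_measurable M"
  shows "(LINT x:K|scale_measure (ennreal r) M. f x) = r * (LINT x:K|M. f x)"
proof -
  have "scale_measure (ennreal r) M = density M (\<lambda>_. ennreal r)"
    by (rule measure_eqI) (simp_all add: emeasure_density_const)
  then have "(LINT x:K|scale_measure (ennreal r) M. f x)
      = integral\<^sup>L (density M (\<lambda>_. ennreal r)) (\<lambda>x. indicator K x *\<^sub>R f x)"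
    unfolding set_lebesgue_integral_def by simp
  also have "\<dots> = integral\<^sup>L M (\<lambda>x. r *\<^sub>R (indicator K x *\<^sub>R f x))"
    by (rule integral_density[OF f]) (use r in auto)
  finally show ?thesis unfolding set_lebesgue_integral_def by simp
qed

lemma set_integrable_continuous_on_compact:
  fixes S :: "'a::t2_space \<Rightarrow> real"
  assumes fin: "finite_measure \<mu>" and sets: "sets \<mu> = sets borel"
    and K: "compact K" and S: "continuous_on K S"
  shows "set_integrable \<mu> K S"
proof -
  obtain C where C: "0 < C" "\<forall>q\<in>K. \<bar>S q\<bar> \<le> C"
    using compact_imp_bounded[OF compact_continuous_image[OF S K]] unfolding bounded_pos by auto
  have "(\<lambda>p. indicator K p *\<^sub>R S p) \<in> borel_measurable \<mu>"
    by (rule borel_measurable_indicator_continuous_on[OF sets compact_imp_closed[OF K] S])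
  moreover have "AE p in \<mu>. norm (indicator K p *\<^sub>R S p) \<le> C"
    using C by (intro AE_I2) (auto simp: indicator_def)
  ultimately show ?thesis
    unfolding set_integrable_def by (intro finite_measure.integrable_const_bound[OF fin])
qed

lemma measure_support_subset_level_set:
  fixes \<mu> :: "'a::{metric_space, second_countable_topology} measure" and S :: "'a \<Rightarrow> real"
  assumes fin: "finite_measure \<mu>" and sets: "sets \<mu> = sets borel" and K: "compact K"
    and AE_K: "AE p in \<mu>. p \<in> K" and S: "continuous_on K S"
    and le: "\<forall>p\<in>K. S p \<le> \<alpha>" and int: "(LINT p:K|\<mu>. S p - \<alpha>) = 0"
  shows "measure_support \<mu> \<subseteq> {p \<in> K. S p = \<alpha>}"
proof -
  have "integrable \<mu> (\<lambda>p. indicator K p *\<^sub>R (\<alpha> - S p))"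
    using set_integrable_continuous_on_compact[OF fin sets K, of "\<lambda>p. \<alpha> - S p"] S
    unfolding set_integrable_def by (simp add: continuous_on_diff)
  moreover have "integral\<^sup>L \<mu> (\<lambda>p. indicator K p *\<^sub>R (\<alpha> - S p)) = 0"
  proof -
    have "(\<lambda>p. indicator K p *\<^sub>R (\<alpha> - S p)) = (\<lambda>p. - (indicator K p *\<^sub>R (S p - \<alpha>)))"
      by (simp add: algebra_simps)
    then show ?thesis using int unfolding set_lebesgue_integral_def by simp
  qed
  ultimately have "AE p in \<mu>. indicator K p *\<^sub>R (\<alpha> - S p) = 0"
    using le by (subst integral_nonneg_eq_0_iff_AE[symmetric]) (auto simp: indicator_def)
  with AE_K have "AE p in \<mu>. p \<in> {p \<in> K. S p = \<alpha>}"
    by eventually_elim simp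
  moreover have "closed {p \<in> K. S p = \<alpha>}"
    by (rule continuous_closed_preimage_constant[OF S compact_imp_closed[OF K]])
  ultimately show ?thesis
    using AE_mem_closed_iff_measure_support_subset[OF sets] by blast
qed

lemma max_eq_and_measure_support_subset_argmax:
  fixes \<mu> :: "'a::{metric_space, second_countable_topology} measure" and S :: "'a \<Rightarrow> real"
  assumes fin: "finite_measure \<mu>" and sets: "sets \<mu> = sets borel" and K: "compact K"
    and AE_K: "AE p in \<mu>. p \<in> K" and pos: "emeasure \<mu> K \<noteq> 0" and S: "continuous_on K S"
    and le: "\<forall>p\<in>K. S p \<le> \<alpha>" and int: "(LINT p:K|\<mu>. S p - \<alpha>) = 0"
  shows "(SUP q\<in>K. S q) = \<alpha>" and "measure_support \<mu> \<subseteq> {p \<in> K. S p = (SUP q\<in>K. S q)}"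
proof -
  have supp: "measure_support \<mu> \<subseteq> {p \<in> K. S p = \<alpha>}"
    by (rule measure_support_subset_level_set[OF fin sets K AE_K S le int])
  have "measure_support \<mu> \<noteq> {}"
  proof
    assume "measure_support \<mu> = {}"
    then have "AE p in \<mu>. p \<in> {}"
      using AE_mem_closed_iff_measure_support_subset[OF sets closed_empty] by simp
    then have "emeasure \<mu> UNIV = 0"
      using AE_mem_iff_emeasure_compl_eq_0[OF sets, of "{}"] by simp
    then show False
      using pos emeasure_mono[of K UNIV \<mu>] sets compact_imp_closed[OF K] by simp
  qed
  then obtain p1 where p1: "p1 \<in> K" "S p1 = \<alpha>" using supp by blast
  have "bdd_above (S ` K)"
    by (intro bounded_imp_bdd_above compact_imp_bounded compact_continuous_image S K)
  then show SUP: "(SUP q\<in>K. S q) = \<alpha>"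
    using p1 le by (intro antisym cSUP_least cSUP_upper2[where x = p1]) auto
  show "measure_support \<mu> \<subseteq> {p \<in> K. S p = (SUP q\<in>K. S q)}"
    using supp unfolding SUP .
qed

lemma normalize_multiplier_measure:
  fixes K :: "'a::{metric_space, second_countable_topology} set" and S :: "'a \<Rightarrow> real"
    and g :: "'h \<Rightarrow> 'a \<Rightarrow> real"
  assumes K: "compact K" "K \<noteq> {}" and S: "continuous_on K S"
    and g: "\<And>h. h \<in> H \<Longrightarrow> continuous_on K (g h)"
    and fin: "finite_measure \<mu>" and sets: "sets \<mu> = sets borel" and reg: "regular_measure \<mu>"
    and null: "emeasure \<mu> (UNIV - K) = 0"
    and eq: "\<forall>h\<in>H. L h + (LINT p:K|\<mu>. g h p) = 0"
    and le: "\<forall>p\<in>K. S p \<le> \<alpha>" and int: "(LINT p:K|\<mu>. S p - \<alpha>) = 0"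
  shows "\<exists>lam\<ge>0. \<exists>\<nu>. prob_space \<nu> \<and> sets \<nu> = sets borel \<and> regular_measure \<nu> \<and>
      measure_support \<nu> \<subseteq> {p \<in> K. S p = (SUP q\<in>K. S q)} \<and>
      (\<forall>h\<in>H. L h + lam * (LINT p:K|\<nu>. g h p) = 0) \<and>
      (SUP q\<in>K. S q) \<le> \<alpha> \<and> lam * ((SUP q\<in>K. S q) - \<alpha>) = 0"
proof -
  obtain p0 where p0: "p0 \<in> K" "\<forall>q\<in>K. S q \<le> S p0"
    using continuous_attains_sup[OF K S] by blast
  have SUP: "(SUP q\<in>K. S q) = S p0" by (rule cSup_eq_maximum) (use p0 in auto)
  have SUP_le: "(SUP q\<in>K. S q) \<le> \<alpha>" using le p0 SUP by simp
  have Kb: "K \<in> sets borel" by (rule borel_closed[OF compact_imp_closed[OF K(1)]])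
  have AE_K: "AE p in \<mu>. p \<in> K" using null AE_mem_iff_emeasure_compl_eq_0[OF sets Kb] by simp
  define lam where "lam = measure \<mu> K"
  have em_K: "emeasure \<mu> K = ennreal lam"
    unfolding lam_def using finite_measure.emeasure_eq_measure[OF fin] by simp
  show ?thesis
  proof (cases "lam = 0")
    case True
    \<comment> \<open>then \<open>L = 0\<close> on \<open>H\<close>, and the Dirac measure at a maximiser serves as \<open>\<nu>\<close>\<close>
    then have "AE p in \<mu>. p \<notin> K" using em_K Kb sets by (intro AE_not_in null_setsI) auto
    then have "(LINT p:K|\<mu>. g h p) = 0" for h
      unfolding set_lebesgue_integral_def by (intro integral_eq_zero_AE) auto
    then have "\<forall>h\<in>H. L h + 0 * (LINT p:K|return borel p0. g h p) = 0" using eq by simp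
    moreover have "measure_support (return borel p0) \<subseteq> {p \<in> K. S p = (SUP q\<in>K. S q)}"
      using measure_support_return[of p0] p0 SUP by auto
    ultimately show ?thesis
      using SUP_le regular_measure_return[of p0]
      by (intro exI[of _ 0] conjI exI[of _ "return borel p0"]) (auto intro: prob_space_return)
  next
    case False
    then have lam: "0 < lam" unfolding lam_def by (simp add: zero_less_measure_iff)
    define \<nu> where "\<nu> = scale_measure (ennreal (1 / lam)) \<mu>"
    have "emeasure \<mu> (space \<mu>) = emeasure \<mu> K"
      using AE_K Kb sets by (intro emeasure_eq_AE) (auto simp: sets_eq_imp_space_eq)
    then have "prob_space \<nu>"
      using lam em_K by (intro prob_spaceI) (simp add: \<nu>_def space_scale_measure ennreal_mult[symmetric])
    moreover have "regular_measure \<nu>" unfolding \<nu>_def by (rule regular_measure_scale[OF reg]) simp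
    moreover have "measure_support \<nu> = measure_support \<mu>"
      unfolding \<nu>_def using lam by (intro measure_support_scale) simp
    moreover have "(LINT p:K|\<nu>. g h p) = 1 / lam * (LINT p:K|\<mu>. g h p)" if "h \<in> H" for h
      unfolding \<nu>_def using lam borel_measurable_indicator_continuous_on[OF sets _ g[OF that]] K(1)
      by (intro set_integral_scale_measure) (auto intro: compact_imp_closed)
    moreover have "(SUP q\<in>K. S q) = \<alpha>" and "measure_support \<mu> \<subseteq> {p \<in> K. S p = (SUP q\<in>K. S q)}"
      using max_eq_and_measure_support_subset_argmax[OF fin sets K(1) AE_K _ S le int] em_K lam by auto
    ultimately show ?thesis
      using eq lam sets
      by (intro exI[of _ lam] conjI exI[of _ \<nu>]) (auto simp: \<nu>_def)
  qed
qed

lemma scale_multiplier_measure: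
  fixes K :: "'a::{metric_space, second_countable_topology} set" and S :: "'a \<Rightarrow> real"
    and g :: "'h \<Rightarrow> 'a \<Rightarrow> real"
  assumes K: "compact K" and S: "continuous_on K S"
    and g: "\<And>h. h \<in> H \<Longrightarrow> continuous_on K (g h)"
    and lam: "0 \<le> lam" and prob: "prob_space \<nu>" and sets: "sets \<nu> = sets borel"
    and reg: "regular_measure \<nu>" and supp: "measure_support \<nu> \<subseteq> {p \<in> K. S p = (SUP q\<in>K. S q)}"
    and eq: "\<forall>h\<in>H. L h + lam * (LINT p:K|\<nu>. g h p) = 0"
    and SUP_le: "(SUP q\<in>K. S q) \<le> \<alpha>" and compl: "lam * ((SUP q\<in>K. S q) - \<alpha>) = 0"
  shows "\<exists>\<mu>. finite_measure \<mu> \<and> sets \<mu> = sets borel \<and> regular_measure \<mu> \<and>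
      emeasure \<mu> (UNIV - K) = 0 \<and> (\<forall>h\<in>H. L h + (LINT p:K|\<mu>. g h p) = 0) \<and>
      (\<forall>p\<in>K. S p \<le> \<alpha>) \<and> (LINT p:K|\<mu>. S p - \<alpha>) = 0"
proof -
  define \<mu> where "\<mu> = scale_measure (ennreal lam) \<nu>"
  have Kc: "closed K" by (rule compact_imp_closed[OF K])
  have AE_max: "AE p in \<nu>. p \<in> {p \<in> K. S p = (SUP q\<in>K. S q)}"
    using AE_mem_closed_iff_measure_support_subset[OF sets continuous_closed_preimage_constant[OF S Kc]]
      supp by blast
  then have "AE p in \<nu>. p \<in> K" by eventually_elim simp
  then have "emeasure \<mu> (UNIV - K) = 0"
    unfolding \<mu>_def using AE_mem_iff_emeasure_compl_eq_0[OF sets borel_closed[OF Kc]] by simp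
  moreover have "finite_measure \<mu>"
    using prob_space.emeasure_space_1[OF prob]
    by (intro finite_measureI) (simp add: \<mu>_def space_scale_measure)
  moreover have "regular_measure \<mu>" unfolding \<mu>_def by (rule regular_measure_scale[OF reg]) simp
  moreover have "(LINT p:K|\<mu>. g h p) = lam * (LINT p:K|\<nu>. g h p)" if "h \<in> H" for h
    unfolding \<mu>_def
    by (rule set_integral_scale_measure[OF lam borel_measurable_indicator_continuous_on[OF sets Kc g[OF that]]])
  moreover have "S p \<le> \<alpha>" if "p \<in> K" for p
  proof -
    have "bdd_above (S ` K)"
      by (intro bounded_imp_bdd_above compact_imp_bounded compact_continuous_image S K)
    then show ?thesis using that SUP_le by (meson cSUP_upper order_trans)
  qed
  moreover have "(LINT p:K|\<mu>. S p - \<alpha>) = 0"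
  proof (cases "lam = 0")
    case False
    then have "(SUP q\<in>K. S q) = \<alpha>" using compl by simp
    then have "(LINT p:K|\<nu>. S p - \<alpha>) = 0"
      using AE_max unfolding set_lebesgue_integral_def by (intro integral_eq_zero_AE) auto
    then show ?thesis
      unfolding \<mu>_def
      using borel_measurable_indicator_continuous_on[OF sets Kc continuous_on_diff[OF S continuous_on_const]]
      by (subst set_integral_scale_measure[OF lam]) auto
  qed (simp add: \<mu>_def set_lebesgue_integral_def)
  ultimately show ?thesis
    using eq sets by (intro exI[of _ \<mu>]) (auto simp: \<mu>_def)
qed

theorem multiplier_measure_normalization_iff:
  fixes K :: "'a::{metric_space, second_countable_topology} set" and S :: "'a \<Rightarrow> real"
    and g :: "'h \<Rightarrow> 'a \<Rightarrow> real"
  assumes K: "compact K" "K \<noteq> {}" and S: "continuous_on K S"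
    and g: "\<And>h. h \<in> H \<Longrightarrow> continuous_on K (g h)"
  shows "(\<exists>\<mu>. finite_measure \<mu> \<and> sets \<mu> = sets borel \<and> regular_measure \<mu> \<and>
            emeasure \<mu> (UNIV - K) = 0 \<and> (\<forall>h\<in>H. L h + (LINT p:K|\<mu>. g h p) = 0) \<and>
            (\<forall>p\<in>K. S p \<le> \<alpha>) \<and> (LINT p:K|\<mu>. S p - \<alpha>) = 0)
    \<longleftrightarrow> (\<exists>lam\<ge>0. \<exists>\<nu>. prob_space \<nu> \<and> sets \<nu> = sets borel \<and> regular_measure \<nu> \<and>
            measure_support \<nu> \<subseteq> {p \<in> K. S p = (SUP q\<in>K. S q)} \<and>
            (\<forall>h\<in>H. L h + lam * (LINT p:K|\<nu>. g h p) = 0) \<and>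
            (SUP q\<in>K. S q) \<le> \<alpha> \<and> lam * ((SUP q\<in>K. S q) - \<alpha>) = 0)"
    (is "?unnormalized \<longleftrightarrow> ?normalized")
proof
  assume ?unnormalized
  then obtain \<mu> where "finite_measure \<mu>" "sets \<mu> = sets borel" "regular_measure \<mu>"
    "emeasure \<mu> (UNIV - K) = 0" "\<forall>h\<in>H. L h + (LINT p:K|\<mu>. g h p) = 0"
    "\<forall>p\<in>K. S p \<le> \<alpha>" "(LINT p:K|\<mu>. S p - \<alpha>) = 0"
    by blast
  from normalize_multiplier_measure[OF K S g this] show ?normalized .
next
  assume ?normalized
  then obtain lam \<nu> where "0 \<le> lam" "prob_space \<nu>" "sets \<nu> = sets borel" "regular_measure \<nu>"
    "measure_support \<nu> \<subseteq> {p \<in> K. S p = (SUP q\<in>K. S q)}"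
    "\<forall>h\<in>H. L h + lam * (LINT p:K|\<nu>. g h p) = 0"
    "(SUP q\<in>K. S q) \<le> \<alpha>" "lam * ((SUP q\<in>K. S q) - \<alpha>) = 0"
    by blast
  from scale_multiplier_measure[OF K(1) S g this] show ?unnormalized .
qed

theorem lemma3p15:
  fixes D :: "(real^'n) set" and \<Xi> :: "(real^'m) set"
    and f0 :: "real^'n \<Rightarrow> real" and \<phi> :: "'m \<Rightarrow> real^'n \<Rightarrow> real"
    and \<alpha> :: real
    and F :: "(real^'n \<Rightarrow> real) \<Rightarrow> real" and DF :: "(real^'n \<Rightarrow> real) \<Rightarrow> real"
    and ustar :: "real^'n \<Rightarrow> real"
    and Ainv :: "(real^'n \<Rightarrow> real) \<Rightarrow> (real^'n \<Rightarrow> real)"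
  assumes dim: "CARD('n) \<in> {1, 2, 3}"
    and D_open: "open D" and D_bounded: "bounded D" and D_S: "class_S D" and D_ne: "D \<noteq> {}"
    and f0_L2: "f0 \<in> L2 D" and phi_L2: "\<forall>i. \<phi> i \<in> L2 D"
    and Xi_compact: "compact \<Xi>" and Xi_ne: "\<Xi> \<noteq> {}"
    and F_diff: "L2_frechet_deriv D F ustar DF"
    and ustar_L2: "ustar \<in> L2 D"
    and Ainv: "\<forall>h\<in>L2 D. poisson_sol D h (Ainv h)"
  shows "(\<exists>\<mu> :: ((real^'n) \<times> (real^'m)) measure.
            finite_measure \<mu> \<and> sets \<mu> = sets borel \<and> regular_measure \<mu> \<and>
            emeasure \<mu> (UNIV - closure D \<times> \<Xi>) = 0 \<and>
            (\<forall>h\<in>L2 D. DF h + (LINT p:closure D \<times> \<Xi>|\<mu>. Ainv h (fst p)) = 0) \<and>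
            (\<forall>p\<in>closure D \<times> \<Xi>. Shat Ainv f0 \<phi> ustar p \<le> \<alpha>) \<and>
            (LINT p:closure D \<times> \<Xi>|\<mu>. Shat Ainv f0 \<phi> ustar p - \<alpha>) = 0)
     \<longleftrightarrow>
         (\<exists>lam\<ge>0. \<exists>\<mu> :: ((real^'n) \<times> (real^'m)) measure.
            prob_space \<mu> \<and> sets \<mu> = sets borel \<and> regular_measure \<mu> \<and>
            measure_support \<mu> \<subseteq> Mset D \<Xi> Ainv f0 \<phi> ustar \<and>
            (\<forall>h\<in>L2 D. DF h + lam * (LINT p:closure D \<times> \<Xi>|\<mu>. Ainv h (fst p)) = 0) \<and>
            (SUP q\<in>closure D \<times> \<Xi>. Shat Ainv f0 \<phi> ustar q) \<le> \<alpha> \<and>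
            lam * ((SUP q\<in>closure D \<times> \<Xi>. Shat Ainv f0 \<phi> ustar q) - \<alpha>) = 0)"
proof -
  interpret poisson_solver D Ainv
    using D_open D_bounded Ainv by unfold_locales auto
  have "compact (closure D \<times> \<Xi>)"
    using D_bounded Xi_compact by (simp add: compact_Times compact_closure)
  moreover have "closure D \<times> \<Xi> \<noteq> {}" using D_ne Xi_ne by simp
  moreover have "continuous_on (closure D \<times> \<Xi>) (Shat Ainv f0 \<phi> ustar)"
    using continuous_on_Shat[OF ustar_L2 f0_L2] phi_L2 by blast
  moreover have "continuous_on (closure D \<times> \<Xi>) (\<lambda>p. Ainv h (fst p))" if "h \<in> L2 D" for h
    using continuous_on_Ainv[OF that] by (rule continuous_on_compose2) (auto intro: continuous_intros)
  ultimately show ?thesis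
    unfolding Mset_def by (rule multiplier_measure_normalization_iff)
qed

end
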